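(* Let $T_t$ be an aperiodic ergodic measure-preserving flow on a standard probability space $(X,m)$, and let $\varphi:(0,\infty)\to(0,\infty)$ satisfy $\varphi(t)\to0$ as $t\to+\infty$. Then there exists $f\in L_1(X,m)$ with $\int_X f\,dm=0$ such that for almost every $x\in X$ $$\limsup_{t\to+\infty}\frac{1}{\varphi(t)}|A(f,t,x)|=+\infty.$$
   Context: A flow is aperiodic if almost every point is not periodic (there is no $t>0$ with $T_tx=x$). Birkhoff average: $A(f,t,x)=\frac1t\int_0^t f(T_sx)\,ds$. *)

theory Defs
  imports "HOL-Probability.Probability"
begin

definition standard_prob_space :: "'a::polish_space measure \<Rightarrow> bool" where
  "standard_prob_space M \<longleftrightarrow> prob_space M \<and> sets M = sets (borel :: 'a measure)"

definition mp_flow :: "'a measure \<Rightarrow> (real \<Rightarrow> 'a \<Rightarrow> 'a) \<Rightarrow> bool" where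
  "mp_flow M T \<longleftrightarrow>
     (\<lambda>(t, x). T t x) \<in> measurable (lborel \<Otimes>\<^sub>M M) M
   \<and> (\<forall>x\<in>space M. T 0 x = x)
   \<and> (\<forall>s t. \<forall>x\<in>space M. T (s + t) x = T s (T t x))
   \<and> (\<forall>t. T t \<in> measurable M M \<and> distr M M (T t) = M)"

definition ergodic_flow :: "'a measure \<Rightarrow> (real \<Rightarrow> 'a \<Rightarrow> 'a) \<Rightarrow> bool" where
  "ergodic_flow M T \<longleftrightarrow>
     (\<forall>A\<in>sets M. (\<forall>t. T t -` A \<inter> space M = A) \<longrightarrow> measure M A = 0 \<or> measure M A = 1)"

definition aperiodic_flow :: "'a measure \<Rightarrow> (real \<Rightarrow> 'a \<Rightarrow> 'a) \<Rightarrow> bool" where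
  "aperiodic_flow M T \<longleftrightarrow> (AE x in M. \<forall>t>0. T t x \<noteq> x)"

definition birkhoff_avg :: "(real \<Rightarrow> 'a \<Rightarrow> 'a) \<Rightarrow> ('a \<Rightarrow> real) \<Rightarrow> real \<Rightarrow> 'a \<Rightarrow> real" where
  "birkhoff_avg T f t x = (1 / t) * (LBINT s=0..t. f (T s x))"

end

theory Submission
  imports Defs
begin

text \<open>
  Take \<open>f = h - h \<circ> T\<^sub>1\<close> with \<open>h = \<Sum>\<^sub>j w\<^sub>j 1\<^bsub>D\<^sub>j\<^esub>\<close> integrable; then \<open>\<integral> f = 0\<close> and
  \<open>t A(f, t, x) = \<integral>\<^sub>0\<^sup>1 h(T\<^sub>s x) ds - \<integral>\<^sub>t\<^sup>t\<^sup>+\<^sup>1 h(T\<^sub>s x) ds\<close>. The sets \<open>D\<^sub>j\<close> have measure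
  \<open>O(1 / L\<^sub>j)\<close>, yet almost every orbit spends a whole unit time interval in \<open>D\<^sub>j\<close> somewhere in
  \<open>[N\<^sub>j, N\<^sub>j + L\<^sub>j]\<close>, for all large \<open>j\<close> (Borel-Cantelli). There the window integral is at least
  \<open>w\<^sub>j\<close>, so \<open>|A(f, \<tau>, x)| \<ge> w\<^sub>j / (2 \<tau>)\<close>, which beats \<open>j \<phi>(\<tau>)\<close> when \<open>\<phi> \<le> 4\<^sup>-\<^sup>j\<close> beyond \<open>N\<^sub>j\<close>
  and \<open>w\<^sub>j \<approx> j (N\<^sub>j + L\<^sub>j) / 4\<^sup>j\<close>; the latter choice keeps \<open>\<Sum> w\<^sub>j \<mu>(D\<^sub>j)\<close> finite.

  The sets \<open>D\<^sub>j\<close> come from a Rokhlin-type tower. Aperiodicity yields a set \<open>D\<close> of positive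
  measure that is not revisited at times in \<open>[1, L + 3]\<close>: occupation times of countably many
  basic open sets separate \<open>x\<close> from \<open>T\<^sub>s x\<close>, uniformly for \<open>s \<in> [1, L]\<close>, on a set of positive
  measure. By ergodicity almost every orbit visits \<open>D\<close>; the points whose first visit happens at
  a time in \<open>[k L, k L + 1)\<close> form the floors of a tower of measure at most \<open>5 / L\<close>, and almost
  every orbit that does not visit \<open>D\<close> during \<open>[0, 1)\<close> spends a unit time interval in the tower
  before time \<open>L + 1\<close>.
\<close>

lemma lborel_inner_closed:
  fixes S :: "real set"
  assumes "S \<in> sets borel" "0 < e"
  shows "\<exists>F. closed F \<and> F \<subseteq> S \<and> emeasure lborel (S - F) < ennreal e"
proof -
  have "S \<in> sets lebesgue" using assms(1) by (simp add: sets_completionI_sets)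
  then obtain F where F: "closed F" "F \<subseteq> S" "emeasure lebesgue (S - F) < ennreal e"
    using sets_lebesgue_inner_closed assms(2) by metis
  have "S - F \<in> sets borel" using assms(1) borel_closed[OF F(1)] by (rule sets.Diff)
  then have "emeasure lebesgue (S - F) = emeasure lborel (S - F)"
    by (simp add: emeasure_completion main_part_sets)
  with F show ?thesis by auto
qed

lemma continuous_on_basis_preimage:
  fixes f :: "'a::topological_space \<Rightarrow> 'b::topological_space"
  assumes "topological_basis B" and "\<And>U. U \<in> B \<Longrightarrow> \<exists>A. open A \<and> A \<inter> K = f -` U \<inter> K"
  shows "continuous_on K f"
  unfolding continuous_on_open_invariant
proof (intro allI impI)
  fix V :: "'b set" assume "open V"
  then obtain B' where B': "B' \<subseteq> B" "\<Union>B' = V" using assms(1) unfolding topological_basis_def by auto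
  obtain A where A: "\<And>U. U \<in> B \<Longrightarrow> open (A U) \<and> A U \<inter> K = f -` U \<inter> K"
    using assms(2) by metis
  have "f -` V \<inter> K = (\<Union>U\<in>B'. A U \<inter> K)" using A B' by auto
  also have "\<dots> = (\<Union>U\<in>B'. A U) \<inter> K" by auto
  finally have "f -` V \<inter> K = (\<Union>U\<in>B'. A U) \<inter> K" .
  moreover have "open (\<Union>U\<in>B'. A U)" using A B'(1) by auto
  ultimately show "\<exists>A. open A \<and> A \<inter> K = f -` V \<inter> K" by metis
qed

text \<open>Approximate the preimage of each basic open set, and its complement in \<open>[a, b]\<close>, from
  inside by closed sets; on the set \<open>K\<close> where all approximations are exact, every such preimage
  is relatively open.\<close>

theorem lusin:
  fixes \<Phi> :: "real \<Rightarrow> 'a::second_countable_topology"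
  assumes \<Phi>[measurable]: "\<Phi> \<in> borel_measurable borel" and "0 < \<delta>"
  shows "\<exists>K. closed K \<and> K \<subseteq> {a..b} \<and> emeasure lborel ({a..b} - K) \<le> ennreal \<delta>
    \<and> continuous_on K \<Phi>"
proof -
  obtain B :: "'a set set" where B: "countable B" "topological_basis B"
    using ex_countable_basis by auto
  have "B \<noteq> {}"
  proof
    assume "B = {}"
    with B(2) have "\<And>S. open S \<Longrightarrow> S = {}" unfolding topological_basis_def by auto
    then show False using open_UNIV by auto
  qed
  define bs where "bs = from_nat_into B"
  have range_bs: "range bs = B" unfolding bs_def using \<open>B \<noteq> {}\<close> B(1) by simp
  have open_bs: "open (bs n)" for n using range_bs B(2) unfolding topological_basis_def by auto
  define \<epsilon> :: "nat \<Rightarrow> real" where "\<epsilon> n = \<delta> / 4 * (1/2)^n" for n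
  have \<epsilon>_pos: "\<epsilon> n > 0" for n using \<open>0 < \<delta>\<close> by (simp add: \<epsilon>_def)
  define E where "E n = {a..b} \<inter> \<Phi> -` bs n" for n
  have E_borel[measurable]: "E n \<in> sets borel" for n
    unfolding E_def using open_bs[of n] by (intro sets.Int) (auto intro!: measurable_sets_borel[OF \<Phi>])
  have Ec_borel: "{a..b} - E n \<in> sets borel" for n by auto
  have "\<forall>n. \<exists>F1. closed F1 \<and> F1 \<subseteq> E n \<and> emeasure lborel (E n - F1) < ennreal (\<epsilon> n)"
    by (intro allI lborel_inner_closed E_borel \<epsilon>_pos)
  then obtain F1 where F1: "\<And>n. closed (F1 n)" "\<And>n. F1 n \<subseteq> E n"
      "\<And>n. emeasure lborel (E n - F1 n) < ennreal (\<epsilon> n)"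
    by metis
  have "\<forall>n. \<exists>F2. closed F2 \<and> F2 \<subseteq> {a..b} - E n
      \<and> emeasure lborel ({a..b} - E n - F2) < ennreal (\<epsilon> n)"
    by (intro allI lborel_inner_closed Ec_borel \<epsilon>_pos)
  then obtain F2 where F2: "\<And>n. closed (F2 n)" "\<And>n. F2 n \<subseteq> {a..b} - E n"
      "\<And>n. emeasure lborel ({a..b} - E n - F2 n) < ennreal (\<epsilon> n)"
    by metis
  define K where "K = {a..b} \<inter> (\<Inter>n. F1 n \<union> F2 n)"
  have "closed K" unfolding K_def using F1(1) F2(1) by (intro closed_Int closed_INT closed_Un) auto
  have "K \<subseteq> {a..b}" unfolding K_def by auto
  have diff_sub: "{a..b} - K \<subseteq> (\<Union>n. (E n - F1 n) \<union> ({a..b} - E n - F2 n))"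
    unfolding K_def by auto
  have "emeasure lborel ({a..b} - K)
      \<le> emeasure lborel (\<Union>n. (E n - F1 n) \<union> ({a..b} - E n - F2 n))"
    by (intro emeasure_mono[OF diff_sub]) (use F1(1) F2(1) in auto)
  also have "\<dots> \<le> (\<Sum>n. emeasure lborel ((E n - F1 n) \<union> ({a..b} - E n - F2 n)))"
    by (intro emeasure_subadditive_countably) (use F1(1) F2(1) in auto)
  also have "\<dots> \<le> (\<Sum>n. ennreal (2 * \<epsilon> n))"
  proof (intro suminf_le)
    fix n
    have "emeasure lborel ((E n - F1 n) \<union> ({a..b} - E n - F2 n))
        \<le> emeasure lborel (E n - F1 n) + emeasure lborel ({a..b} - E n - F2 n)"
      by (intro emeasure_subadditive) (use F1(1) F2(1) in auto)
    also have "\<dots> \<le> ennreal (\<epsilon> n) + ennreal (\<epsilon> n)"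
      using F1(3)[of n] F2(3)[of n] by (intro add_mono) auto
    also have "\<dots> = ennreal (2 * \<epsilon> n)" using \<epsilon>_pos[of n] by (simp add: ennreal_plus[symmetric])
    finally show "emeasure lborel ((E n - F1 n) \<union> ({a..b} - E n - F2 n)) \<le> ennreal (2 * \<epsilon> n)" .
  qed auto
  also have "\<dots> = ennreal \<delta>"
  proof -
    have "(\<lambda>n. \<delta> / 2 * (1/2::real)^n) sums (\<delta> / 2 * (1 / (1 - 1/2)))"
      by (intro sums_mult geometric_sums) simp
    moreover have "(\<lambda>n. \<delta> / 2 * (1/2::real)^n) = (\<lambda>n. 2 * \<epsilon> n)"
      by (auto simp: \<epsilon>_def)
    ultimately have "(\<lambda>n. 2 * \<epsilon> n) sums \<delta>" by simp
    then show ?thesis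
      using \<epsilon>_pos by (subst suminf_ennreal2) (auto simp: sums_iff less_imp_le)
  qed
  finally have "emeasure lborel ({a..b} - K) \<le> ennreal \<delta>" .
  moreover have "continuous_on K \<Phi>"
  proof (rule continuous_on_basis_preimage[OF B(2)])
    fix U assume "U \<in> B"
    then obtain n where "U = bs n" using range_bs by auto
    have "K \<subseteq> F1 n \<union> F2 n" unfolding K_def by auto
    moreover have "F1 n \<subseteq> \<Phi> -` bs n" using F1(2)[of n] unfolding E_def by auto
    moreover have "F2 n \<inter> \<Phi> -` bs n = {}" using F2(2)[of n] \<open>K \<subseteq> {a..b}\<close> unfolding E_def by auto
    ultimately have "- F2 n \<inter> K = \<Phi> -` U \<inter> K" using \<open>U = bs n\<close> by auto
    then show "\<exists>A. open A \<and> A \<inter> K = \<Phi> -` U \<inter> K" using F2(1)[of n] by blast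
  qed
  ultimately show ?thesis using \<open>closed K\<close> \<open>K \<subseteq> {a..b}\<close> by blast
qed

corollary lusin_positive_compact:
  fixes \<Phi> :: "real \<Rightarrow> 'a::second_countable_topology"
  assumes "\<Phi> \<in> borel_measurable borel" and "a < b"
  shows "\<exists>K. compact K \<and> K \<subseteq> {a..b} \<and> emeasure lborel K > 0 \<and> continuous_on K \<Phi>"
proof -
  obtain K where K: "closed K" "K \<subseteq> {a..b}" "continuous_on K \<Phi>"
    and small: "emeasure lborel ({a..b} - K) \<le> ennreal ((b - a) / 2)"
    using lusin[OF assms(1), of "(b - a) / 2" a b] \<open>a < b\<close> by auto
  have "compact K"
    using K(1,2) bounded_subset[OF bounded_closed_interval] by (auto simp: compact_eq_bounded_closed)
  have [measurable]: "K \<in> sets borel" using K(1) by auto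
  have "ennreal (b - a) = emeasure lborel {a..b}" using \<open>a < b\<close> by simp
  also have "\<dots> \<le> emeasure lborel K + emeasure lborel ({a..b} - K)"
    by (rule order_trans[OF emeasure_mono emeasure_subadditive]) auto
  also have "\<dots> \<le> emeasure lborel K + ennreal ((b - a) / 2)" using small by (intro add_left_mono)
  finally have total: "ennreal (b - a) \<le> emeasure lborel K + ennreal ((b - a) / 2)" .
  have "emeasure lborel K > 0"
  proof (rule ccontr)
    assume "\<not> 0 < emeasure lborel K"
    with total have "ennreal (b - a) \<le> ennreal ((b - a) / 2)" by (simp add: not_gr_zero)
    then have "b - a \<le> (b - a) / 2" using \<open>a < b\<close> by (subst (asm) ennreal_le_iff) auto
    then show False using \<open>a < b\<close> by simp
  qed
  with \<open>compact K\<close> K show ?thesis by blast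
qed

lemma rat_approx_in_interval:
  fixes a b s e :: real
  assumes "a \<le> s" "s \<le> b" "a < b" "e > 0"
  shows "\<exists>q::rat. a \<le> of_rat q \<and> of_rat q \<le> b \<and> \<bar>of_rat q - s\<bar> < e"
proof (cases "s < b")
  case True
  obtain r where r: "r \<in> \<rat>" "s < r" "r < min b (s + e)"
    using Rats_dense_in_real[of s "min b (s + e)"] True assms by auto
  then obtain q where "r = of_rat q" by (auto elim: Rats_cases)
  then show ?thesis using r assms by (intro exI[of _ q]) auto
next
  case False
  then have "s = b" using assms by auto
  obtain r where r: "r \<in> \<rat>" "max a (s - e) < r" "r < s"
    using Rats_dense_in_real[of "max a (s - e)" s] \<open>s = b\<close> assms by auto
  then obtain q where "r = of_rat q" by (auto elim: Rats_cases)
  then show ?thesis using r assms by (intro exI[of _ q]) auto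
qed

lemma rat_witness_in_interval:
  fixes f :: "real \<Rightarrow> real"
  assumes "continuous_on {a..b} f" "a < b" "t \<in> {a..b}" "c < f t"
  shows "\<exists>q::rat. of_rat q \<in> {a..b} \<and> c < f (of_rat q)"
proof -
  obtain d where "d > 0" and d: "\<And>s. s \<in> {a..b} \<Longrightarrow> dist s t < d \<Longrightarrow> dist (f s) (f t) < f t - c"
    using assms(1,3,4) unfolding continuous_on_iff by (metis diff_gt_0_iff_gt)
  obtain q :: rat where q: "a \<le> of_rat q" "of_rat q \<le> b" "\<bar>of_rat q - t\<bar> < d"
    using rat_approx_in_interval[of a t b d] assms(2,3) \<open>d > 0\<close> by auto
  then have "dist (f (of_rat q)) (f t) < f t - c" by (intro d) (auto simp: dist_real_def)
  then show ?thesis using q by (intro exI[of _ q]) (auto simp: dist_real_def)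
qed

lemma lborel_integral_enn2real:
  fixes g :: "real \<Rightarrow> ennreal"
  assumes [measurable]: "g \<in> borel_measurable borel" "A \<in> sets borel" "B \<in> sets borel"
    and "A \<subseteq> B" and finite: "(\<integral>\<^sup>+s. indicator B s * g s \<partial>lborel) \<noteq> \<infinity>"
  shows "integrable lborel (\<lambda>s. indicator A s * enn2real (g s))"
    and "(\<integral>s. indicator A s * enn2real (g s) \<partial>lborel) = enn2real (\<integral>\<^sup>+s. indicator A s * g s \<partial>lborel)"
proof -
  have "AE s in lborel. indicator B s * g s \<noteq> \<infinity>"
    by (rule nn_integral_PInf_AE) (use finite in auto)
  then have "AE s in lborel. ennreal (indicator A s * enn2real (g s)) = indicator A s * g s"
  proof eventually_elim
    case (elim s)
    then show ?case using \<open>A \<subseteq> B\<close> by (auto simp: indicator_def ennreal_enn2real_if)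
  qed
  then have eq: "(\<integral>\<^sup>+s. ennreal (indicator A s * enn2real (g s)) \<partial>lborel)
      = (\<integral>\<^sup>+s. indicator A s * g s \<partial>lborel)"
    by (rule nn_integral_cong_AE)
  have "(\<integral>\<^sup>+s. indicator A s * g s \<partial>lborel) \<le> (\<integral>\<^sup>+s. indicator B s * g s \<partial>lborel)"
    using \<open>A \<subseteq> B\<close> by (intro nn_integral_mono) (auto simp: indicator_def)
  then have "(\<integral>\<^sup>+s. ennreal (indicator A s * enn2real (g s)) \<partial>lborel) < \<infinity>"
    using finite eq by (simp add: less_top[symmetric]) (metis top.extremum_uniqueI)
  then show "integrable lborel (\<lambda>s. indicator A s * enn2real (g s))"
    by (intro integrableI_nonneg) auto
  show "(\<integral>s. indicator A s * enn2real (g s) \<partial>lborel) = enn2real (\<integral>\<^sup>+s. indicator A s * g s \<partial>lborel)"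
    by (subst integral_eq_nn_integral) (use eq in auto)
qed

lemma interval_integral_telescope:
  fixes \<phi> :: "real \<Rightarrow> real"
  assumes "1 \<le> t"
    and integrable: "\<And>A. A \<in> sets borel \<Longrightarrow> A \<subseteq> {0..t + 1} \<Longrightarrow> integrable lborel (\<lambda>s. indicator A s * \<phi> s)"
  shows "(LBINT s=0..t. \<phi> s - \<phi> (1 + s))
    = (\<integral>s. indicator {0<..1} s * \<phi> s \<partial>lborel) - (\<integral>s. indicator {t..<t+1} s * \<phi> s \<partial>lborel)"
proof -
  have i1: "integrable lborel (\<lambda>s. indicator {0<..<t} s * \<phi> s)"
    and i2: "integrable lborel (\<lambda>s. indicator {1<..<t+1} s * \<phi> s)"
    and i3: "integrable lborel (\<lambda>s. indicator {0<..1} s * \<phi> s)"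
    and i4: "integrable lborel (\<lambda>s. indicator {t..<t+1} s * \<phi> s)"
    using \<open>1 \<le> t\<close> by (auto intro!: integrable)
  have shift: "(\<lambda>s. indicator {0<..<t} s * \<phi> (1 + s))
      = (\<lambda>s. (\<lambda>r. indicator {1<..<t+1} r * \<phi> r) (1 + 1 * s))"
    by (auto simp: indicator_def)
  have i5: "integrable lborel (\<lambda>s. indicator {0<..<t} s * \<phi> (1 + s))"
    unfolding shift by (rule lborel_integrable_real_affine[OF i2]) simp
  have int5: "(\<integral>s. indicator {0<..<t} s * \<phi> (1 + s) \<partial>lborel)
      = (\<integral>s. indicator {1<..<t+1} s * \<phi> s \<partial>lborel)"
    unfolding shift using lborel_integral_real_affine[of 1 "\<lambda>r. indicator {1<..<t+1} r * \<phi> r" 1] by simp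
  have "(LBINT s=0..t. \<phi> s - \<phi> (1 + s)) = (\<integral>s. indicator {0<..<t} s * (\<phi> s - \<phi> (1 + s)) \<partial>lborel)"
    using \<open>1 \<le> t\<close> by (simp add: interval_lebesgue_integral_def set_lebesgue_integral_def zero_ereal_def)
  also have "\<dots> = (\<integral>s. indicator {0<..<t} s * \<phi> s - indicator {0<..<t} s * \<phi> (1 + s) \<partial>lborel)"
    by (simp add: algebra_simps)
  also have "\<dots> = (\<integral>s. indicator {0<..<t} s * \<phi> s \<partial>lborel) - (\<integral>s. indicator {1<..<t+1} s * \<phi> s \<partial>lborel)"
    using Bochner_Integration.integral_diff[OF i1 i5] int5 by simp
  also have "\<dots> = (\<integral>s. indicator {0<..<t} s * \<phi> s - indicator {1<..<t+1} s * \<phi> s \<partial>lborel)"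
    using Bochner_Integration.integral_diff[OF i1 i2] by simp
  also have "\<dots> = (\<integral>s. indicator {0<..1} s * \<phi> s - indicator {t..<t+1} s * \<phi> s \<partial>lborel)"
    by (intro Bochner_Integration.integral_cong refl) (use \<open>1 \<le> t\<close> in \<open>auto simp: indicator_def\<close>)
  also have "\<dots> = (\<integral>s. indicator {0<..1} s * \<phi> s \<partial>lborel) - (\<integral>s. indicator {t..<t+1} s * \<phi> s \<partial>lborel)"
    using Bochner_Integration.integral_diff[OF i3 i4] by simp
  finally show ?thesis .
qed

lemma nn_integral_unit_window_ge:
  fixes g :: "real \<Rightarrow> ennreal"
  assumes "\<And>s. \<tau> < s \<Longrightarrow> s < \<tau> + 1 \<Longrightarrow> ennreal c \<le> g s"
  shows "ennreal c \<le> (\<integral>\<^sup>+s. indicator {\<tau>..<\<tau>+1} s * g s \<partial>lborel)"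
proof -
  have "ennreal c = (\<integral>\<^sup>+s. indicator {\<tau><..<\<tau>+1} s * ennreal c \<partial>lborel)"
    by (subst nn_integral_multc) auto
  also have "\<dots> \<le> (\<integral>\<^sup>+s. indicator {\<tau>..<\<tau>+1} s * g s \<partial>lborel)"
    using assms by (intro nn_integral_mono) (auto simp: indicator_def)
  finally show ?thesis .
qed

lemma Limsup_at_top_eq_PInfI:
  fixes g :: "real \<Rightarrow> ereal"
  assumes "\<And>C N. \<exists>\<tau>\<ge>N. ereal C \<le> g \<tau>"
  shows "Limsup at_top g = \<infinity>"
  unfolding Limsup_def
proof (rule INF_eqI)
  fix P :: "real \<Rightarrow> bool" assume "P \<in> {P. eventually P at_top}"
  then obtain N where N: "\<And>\<tau>. \<tau> \<ge> N \<Longrightarrow> P \<tau>" by (auto simp: eventually_at_top_linorder)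
  have "(SUP x\<in>{x. P x}. g x) = \<infinity>"
  proof (rule SUP_PInfty)
    fix n :: nat
    obtain \<tau> where "\<tau> \<ge> N" "ereal (real n) \<le> g \<tau>" using assms by blast
    then show "\<exists>i\<in>{x. P x}. ereal (real n) \<le> g i" using N by auto
  qed
  then show "\<infinity> \<le> (SUP x\<in>{x. P x}. g x)" by simp
qed auto

lemma ex_thresholds_geometric:
  fixes \<phi> :: "real \<Rightarrow> real"
  assumes "(\<phi> \<longlongrightarrow> 0) at_top"
  shows "\<exists>N. \<forall>j::nat. real j + 1 \<le> N j \<and> (\<forall>\<tau>\<ge>N j. \<phi> \<tau> \<le> 1 / 4^j)"
proof -
  have "\<exists>N. real j + 1 \<le> N \<and> (\<forall>\<tau>\<ge>N. \<phi> \<tau> \<le> 1 / 4^j)" for j :: nat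
  proof -
    have "eventually (\<lambda>\<tau>. \<phi> \<tau> < 1 / 4^j) at_top"
      by (rule order_tendstoD(2)[OF assms]) simp
    then obtain N0 where "\<And>\<tau>. \<tau> \<ge> N0 \<Longrightarrow> \<phi> \<tau> < 1 / 4^j"
      by (auto simp: eventually_at_top_linorder)
    then show ?thesis by (intro exI[of _ "max N0 (real j + 1)"]) (auto intro: less_imp_le)
  qed
  then show ?thesis by metis
qed

lemma weighted_measure_le:
  fixes N \<mu> :: real and L j :: nat
  assumes "0 \<le> N" "N \<le> real L" "4^j \<le> real L" "real L * \<mu> \<le> 5" "0 \<le> \<mu>"
  shows "real j * ((N + real L) / 4^j + 1) * \<mu> \<le> 15 / 2^j"
proof -
  have "(0::real) < 4^j" by simp
  then have "real L > 0" using assms(3) by linarith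
  have "real j * ((N + real L) / 4^j + 1) * \<mu> \<le> real j * ((N + real L) / 4^j + 1) * (5 / real L)"
    using assms(1,4) \<open>real L > 0\<close> by (intro mult_left_mono) (auto simp: field_simps)
  also have "\<dots> = 5 * real j * ((N + real L) / 4^j / real L + 1 / real L)"
    using \<open>real L > 0\<close> by (simp add: field_simps)
  also have "\<dots> \<le> 5 * real j * (2 / 4^j + 1 / 4^j)"
  proof (intro mult_left_mono add_mono)
    show "(N + real L) / 4^j / real L \<le> 2 / 4^j"
      using assms(2) \<open>real L > 0\<close> by (simp add: field_simps)
    show "1 / real L \<le> 1 / 4^j"
      using assms(3) \<open>real L > 0\<close> by (intro divide_left_mono) (auto intro: mult_pos_pos)
  qed auto
  also have "\<dots> = 15 * (real j / 4^j)" by (simp add: field_simps)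
  also have "\<dots> \<le> 15 * (1 / 2^j)"
  proof -
    have "real j \<le> 2^j" using less_exp[of j] by (simp add: less_imp_le)
    then have "real j / 4^j \<le> 2^j / 4^j" by (intro divide_right_mono) auto
    also have "(2::real)^j / 4^j = 1 / 2^j"
      by (simp add: power_divide[symmetric] field_simps power_mult_distrib[symmetric])
    finally show ?thesis by simp
  qed
  finally show ?thesis by simp
qed

lemma ex_emeasure_Int_pos:
  assumes "finite C" "A \<subseteq> (\<Union>c\<in>C. B c)" "A \<in> sets M" "\<And>c. B c \<in> sets M"
    and "emeasure M A > 0"
  shows "\<exists>c\<in>C. emeasure M (A \<inter> B c) > 0"
proof (rule ccontr)
  assume "\<not> ?thesis"
  then have null: "\<And>c. c \<in> C \<Longrightarrow> emeasure M (A \<inter> B c) = 0" by (auto simp: not_gr_zero)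
  have "emeasure M A \<le> emeasure M (\<Union>c\<in>C. A \<inter> B c)"
    by (rule emeasure_mono) (use assms in auto)
  also have "\<dots> \<le> (\<Sum>c\<in>C. emeasure M (A \<inter> B c))"
    by (rule emeasure_subadditive_finite) (use assms in auto)
  also have "\<dots> = 0" using null by simp
  finally show False using assms(5) by simp
qed

lemma ex_countable_Int_stable_basis:
  "\<exists>B::'a::second_countable_topology set set.
     countable B \<and> Int_stable B \<and> UNIV \<in> B \<and> topological_basis B"
proof -
  obtain B :: "'a set set" where B: "countable B" "topological_basis B"
    using ex_countable_basis by auto
  define U where "U = Inter ` {F. finite F \<and> F \<subseteq> B}"
  have "countable U" unfolding U_def by (intro countable_image countable_Collect_finite_subset B)
  moreover have "Int_stable U"
    unfolding Int_stable_def U_def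
  proof safe
    fix F G assume "finite F" "F \<subseteq> B" "finite G" "G \<subseteq> B"
    then show "\<Inter>F \<inter> \<Inter>G \<in> Inter ` {F. finite F \<and> F \<subseteq> B}"
      by (intro image_eqI[of _ _ "F \<union> G"]) auto
  qed
  moreover have "UNIV \<in> U" unfolding U_def by (intro image_eqI[of _ _ "{}"]) auto
  moreover have "topological_basis U"
    unfolding topological_basis_def
  proof safe
    fix b assume "b \<in> U"
    then obtain F where "b = \<Inter>F" "finite F" "F \<subseteq> B" unfolding U_def by auto
    then show "open b" using B(2) unfolding topological_basis_def by (auto intro!: open_Inter)
  next
    fix x :: "'a set" assume "open x"
    then obtain B' where "B' \<subseteq> B" "\<Union>B' = x" using B(2) unfolding topological_basis_def by auto
    moreover have "B' \<subseteq> U"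
      unfolding U_def using \<open>B' \<subseteq> B\<close> by (auto intro!: image_eqI[of _ _ "{b}" for b])
    ultimately show "\<exists>B'\<subseteq>U. \<Union>B' = x" by auto
  qed
  ultimately show ?thesis by blast
qed

text \<open>A fixed countable Int-stable basis: it generates the Borel sets, so finite measures are
  determined by their values on it.\<close>

definition probes :: "'a::second_countable_topology set set" where
  "probes = (SOME B. countable B \<and> Int_stable B \<and> UNIV \<in> B \<and> topological_basis B)"

lemma
  shows countable_probes: "countable probes"
    and Int_stable_probes: "Int_stable probes"
    and UNIV_in_probes: "UNIV \<in> probes"
    and topological_basis_probes: "topological_basis probes"
  using someI_ex[OF ex_countable_Int_stable_basis] unfolding probes_def by blast+

lemma open_probe: "U \<in> probes \<Longrightarrow> open U"
  using topological_basis_probes unfolding topological_basis_def by auto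

section \<open>Measure-preserving flows and occupation times\<close>

locale standard_flow =
  fixes M :: "'a::polish_space measure" and T :: "real \<Rightarrow> 'a \<Rightarrow> 'a"
  assumes standard: "standard_prob_space M" and flow: "mp_flow M T"
begin

sublocale prob_space M
  using standard unfolding standard_prob_space_def by simp

lemma sets_eq_borel: "sets M = sets borel"
  using standard unfolding standard_prob_space_def by simp

lemma space_eq_UNIV: "space M = UNIV"
  using sets_eq_imp_space_eq[OF sets_eq_borel] by simp

lemma flow_zero[simp]: "T 0 x = x"
  using flow unfolding mp_flow_def by (simp add: space_eq_UNIV)

lemma flow_add: "T (s + t) x = T s (T t x)"
  using flow unfolding mp_flow_def by (simp add: space_eq_UNIV)

lemma flow_neg_cancel[simp]: "T (- t) (T t x) = x"
  using flow_add[of "- t" t x] by simp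

lemma measurable_flow[measurable]: "T t \<in> measurable M M"
  using flow unfolding mp_flow_def by simp

lemma distr_flow: "distr M M (T t) = M"
  using flow unfolding mp_flow_def by simp

lemma measurable_flow_joint[measurable]:
  "(\<lambda>p. T (fst p) (snd p)) \<in> measurable (lborel \<Otimes>\<^sub>M M) M"
  using flow unfolding mp_flow_def by (simp add: case_prod_beta')

lemma measurable_flow_swap[measurable]:
  "(\<lambda>p. T (snd p) (fst p)) \<in> measurable (M \<Otimes>\<^sub>M lborel) M"
proof -
  have "(\<lambda>p. (snd p, fst p)) \<in> measurable (M \<Otimes>\<^sub>M lborel) (lborel \<Otimes>\<^sub>M M)"
    by measurable
  from measurable_compose[OF this measurable_flow_joint] show ?thesis by simp
qed

lemma measurable_orbit[measurable]: "(\<lambda>r. T r x) \<in> measurable lborel M"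
proof -
  have "(\<lambda>r. (r, x)) \<in> measurable lborel (lborel \<Otimes>\<^sub>M M)"
    by (auto simp: space_eq_UNIV intro!: measurable_Pair)
  from measurable_compose[OF this measurable_flow_joint] show ?thesis by simp
qed

lemma emeasure_flow_vimage: "A \<in> sets M \<Longrightarrow> emeasure M (T t -` A) = emeasure M A"
  using emeasure_distr[OF measurable_flow, of A t] by (simp add: distr_flow space_eq_UNIV)

lemma measure_flow_vimage: "A \<in> sets M \<Longrightarrow> measure M (T t -` A) = measure M A"
  by (simp add: emeasure_flow_vimage measure_def)

lemma nn_integral_flow:
  "g \<in> borel_measurable M \<Longrightarrow> (\<integral>\<^sup>+x. g (T t x) \<partial>M) = (\<integral>\<^sup>+x. g x \<partial>M)"
  using nn_integral_distr[OF measurable_flow, of g t] by (simp add: distr_flow)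

lemma integrable_flow: "integrable M (g :: 'a \<Rightarrow> real) \<Longrightarrow> integrable M (\<lambda>x. g (T t x))"
  using integrable_distr_eq[OF measurable_flow, of g t] by (simp add: distr_flow)

lemma integral_flow:
  "(g :: 'a \<Rightarrow> real) \<in> borel_measurable M \<Longrightarrow> (\<integral>x. g (T t x) \<partial>M) = (\<integral>x. g x \<partial>M)"
  using integral_distr[OF measurable_flow, of g t] by (simp add: distr_flow)

lemma nn_integral_orbit_segment:
  fixes g :: "'a \<Rightarrow> ennreal"
  assumes [measurable]: "g \<in> borel_measurable M" and "a \<le> b"
  shows "(\<integral>\<^sup>+x. \<integral>\<^sup>+s. indicator {a..b} s * g (T s x) \<partial>lborel \<partial>M)
    = ennreal (b - a) * (\<integral>\<^sup>+x. g x \<partial>M)"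
proof -
  interpret pair_sigma_finite lborel M by unfold_locales
  have "(\<integral>\<^sup>+x. \<integral>\<^sup>+s. indicator {a..b} s * g (T s x) \<partial>lborel \<partial>M)
      = (\<integral>\<^sup>+s. \<integral>\<^sup>+x. indicator {a..b} s * g (T s x) \<partial>M \<partial>lborel)"
    by (rule Fubini') (simp add: case_prod_beta')
  also have "\<dots> = (\<integral>\<^sup>+s. indicator {a..b} s * (\<integral>\<^sup>+x. g x \<partial>M) \<partial>lborel)"
    by (intro nn_integral_cong) (simp add: nn_integral_cmult nn_integral_flow)
  also have "\<dots> = ennreal (b - a) * (\<integral>\<^sup>+x. g x \<partial>M)"
    using \<open>a \<le> b\<close> by (subst nn_integral_multc) (auto simp: mult.commute)
  finally show ?thesis .
qed

definition occupation :: "'a \<Rightarrow> 'a set \<Rightarrow> real \<Rightarrow> real \<Rightarrow> ennreal" where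
  "occupation x U a b = (\<integral>\<^sup>+r. indicator {a..b} r * indicator U (T r x) \<partial>lborel)"

definition occupation_time :: "'a \<Rightarrow> 'a set \<Rightarrow> real \<Rightarrow> real \<Rightarrow> real" where
  "occupation_time x U a b = enn2real (occupation x U a b)"

lemma measurable_occupation[measurable]:
  "U \<in> sets M \<Longrightarrow> (\<lambda>x. occupation x U a b) \<in> borel_measurable M"
proof -
  assume U: "U \<in> sets M"
  have [measurable]: "Measurable.pred (M \<Otimes>\<^sub>M lborel) (\<lambda>p. T (snd p) (fst p) \<in> U)"
    by (rule pred_sets2[OF U measurable_flow_swap])
  show ?thesis unfolding occupation_def by measurable
qed

lemma measurable_occupation_time[measurable]:
  "U \<in> sets M \<Longrightarrow> (\<lambda>x. occupation_time x U a b) \<in> borel_measurable M"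
  unfolding occupation_time_def by measurable

lemma occupation_le: "a \<le> b \<Longrightarrow> occupation x U a b \<le> ennreal (b - a)"
proof -
  assume "a \<le> b"
  have "occupation x U a b \<le> (\<integral>\<^sup>+r. indicator {a..b} r \<partial>lborel)"
    unfolding occupation_def by (intro nn_integral_mono) (auto simp: indicator_def)
  also have "\<dots> = ennreal (b - a)" using \<open>a \<le> b\<close> by simp
  finally show ?thesis .
qed

lemma occupation_finite: "occupation x U a b \<noteq> \<infinity>"
proof (cases "a \<le> b")
  case True thus ?thesis using occupation_le[OF True, of x U] by (auto simp: top_unique)
next
  case False thus ?thesis by (simp add: occupation_def)
qed

lemma occupation_eq_ennreal: "occupation x U a b = ennreal (occupation_time x U a b)"
  unfolding occupation_time_def using occupation_finite by (simp add: ennreal_enn2real_if)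

lemma occupation_time_nonneg: "0 \<le> occupation_time x U a b"
  by (simp add: occupation_time_def)

lemma occupation_time_le: "a \<le> b \<Longrightarrow> occupation_time x U a b \<le> b - a"
  using occupation_le[of a b x U] by (simp add: occupation_eq_ennreal)

lemma occupation_flow:
  assumes "U \<in> sets M"
  shows "occupation (T c x) U a b = occupation x U (a + c) (b + c)"
proof -
  have "occupation x U (a + c) (b + c)
      = (\<integral>\<^sup>+r. indicator {a+c..b+c} (c + 1 * r) * indicator U (T (c + 1 * r) x) \<partial>lborel)"
    unfolding occupation_def
    by (subst nn_integral_real_affine[where c=1 and t=c]) (use assms in auto)
  also have "\<dots> = occupation (T c x) U a b"
    unfolding occupation_def
    by (intro nn_integral_cong) (auto simp: indicator_def flow_add[symmetric] add.commute)
  finally show ?thesis by simp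
qed

lemma occupation_time_flow:
  "U \<in> sets M \<Longrightarrow> occupation_time (T c x) U a b = occupation_time x U (a + c) (b + c)"
  by (simp add: occupation_time_def occupation_flow)

lemma occupation_shift_le:
  assumes "a \<le> b" "0 \<le> h" "U \<in> sets M"
  shows "occupation x U a (a + h) \<le> occupation x U b (b + h) + ennreal (b - a)"
    and "occupation x U b (b + h) \<le> occupation x U a (a + h) + ennreal (b - a)"
proof -
  have "occupation x U a (a + h)
      \<le> (\<integral>\<^sup>+r. indicator {b..b+h} r * indicator U (T r x) + indicator {a..b} r \<partial>lborel)"
    unfolding occupation_def using assms by (intro nn_integral_mono) (auto simp: indicator_def)
  also have "\<dots> = occupation x U b (b + h) + ennreal (b - a)"
    unfolding occupation_def using assms by (subst nn_integral_add) auto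
  finally show "occupation x U a (a + h) \<le> occupation x U b (b + h) + ennreal (b - a)" .
  have "occupation x U b (b + h)
      \<le> (\<integral>\<^sup>+r. indicator {a..a+h} r * indicator U (T r x) + indicator {a+h..b+h} r \<partial>lborel)"
    unfolding occupation_def using assms by (intro nn_integral_mono) (auto simp: indicator_def)
  also have "\<dots> = occupation x U a (a + h) + ennreal (b - a)"
    unfolding occupation_def using assms by (subst nn_integral_add) auto
  finally show "occupation x U b (b + h) \<le> occupation x U a (a + h) + ennreal (b - a)" .
qed

lemma lipschitz_occupation_time:
  assumes "0 \<le> h" "U \<in> sets M"
  shows "1-lipschitz_on S (\<lambda>a. occupation_time x U a (a + h))"
proof (rule lipschitz_onI)
  have le: "occupation_time x U a (a + h) \<le> occupation_time x U b (b + h) + \<bar>a - b\<bar>" for a b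
  proof -
    have "occupation x U a (a + h) \<le> occupation x U b (b + h) + ennreal \<bar>a - b\<bar>"
      using occupation_shift_le(1)[of a b h U x] occupation_shift_le(2)[of b a h U x] assms
      by (cases "a \<le> b") auto
    then have "ennreal (occupation_time x U a (a + h))
        \<le> ennreal (occupation_time x U b (b + h) + \<bar>a - b\<bar>)"
      by (simp add: occupation_eq_ennreal ennreal_plus occupation_time_nonneg)
    then show ?thesis
      by (subst (asm) ennreal_le_iff) (auto intro: add_nonneg_nonneg occupation_time_nonneg)
  qed
  show "dist (occupation_time x U a (a + h)) (occupation_time x U b (b + h)) \<le> 1 * dist a b"
    for a b using le[of a b] le[of b a] by (simp add: dist_real_def abs_le_iff abs_minus_commute)
qed simp

lemma continuous_on_occupation_time_orbit:
  assumes "U \<in> sets M" "0 \<le> h"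
  shows "continuous_on S (\<lambda>s. occupation_time (T s y) U 0 h)"
proof -
  have "occupation_time (T s y) U 0 h = occupation_time y U s (s + h)" for s
    using occupation_time_flow[OF assms(1), of s y 0 h] by (simp add: add.commute)
  then show ?thesis
    using lipschitz_on_continuous_on[OF lipschitz_occupation_time[OF assms(2,1)]] by simp
qed

text \<open>The forward orbit saturation \<open>\<Union>n. T n -` A\<close> of a forward-invariant set is invariant
  and, by monotone convergence, has the measure of \<open>A\<close>.\<close>

lemma measure_forward_invariant_trivial:
  assumes "ergodic_flow M T" "A \<in> sets M" and forward: "\<And>x c. x \<in> A \<Longrightarrow> 0 \<le> c \<Longrightarrow> T c x \<in> A"
  shows "measure M A = 0 \<or> measure M A = 1"
proof -
  define Z where "Z = (\<Union>n::nat. T (real n) -` A)"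
  have vimage_sets: "T (real n) -` A \<in> sets M" for n
    using measurable_sets[OF measurable_flow assms(2)] by (simp add: space_eq_UNIV)
  have "T t x \<in> Z \<longleftrightarrow> x \<in> Z" for t x
  proof
    assume "T t x \<in> Z"
    then obtain n :: nat where "T (real n + t) x \<in> A" unfolding Z_def by (auto simp: flow_add)
    moreover obtain m :: nat where "real n + t \<le> real m" using real_arch_simple by auto
    ultimately have "T (real m - (real n + t)) (T (real n + t) x) \<in> A" using forward by auto
    then show "x \<in> Z" unfolding Z_def by (auto simp: flow_add[symmetric])
  next
    assume "x \<in> Z"
    then obtain n :: nat where "T (real n) x \<in> A" unfolding Z_def by auto
    moreover obtain m :: nat where "real n - t \<le> real m" using real_arch_simple by auto
    ultimately have "T (real m + t - real n) (T (real n) x) \<in> A" using forward by auto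
    then show "T t x \<in> Z" unfolding Z_def by (auto simp: flow_add[symmetric])
  qed
  then have "T t -` Z \<inter> space M = Z" for t by (auto simp: space_eq_UNIV)
  moreover have "Z \<in> sets M" unfolding Z_def using vimage_sets by blast
  ultimately have Z_trivial: "measure M Z = 0 \<or> measure M Z = 1"
    using assms(1) unfolding ergodic_flow_def by blast
  have "incseq (\<lambda>n::nat. T (real n) -` A)"
  proof (intro monoI subsetI)
    fix n m :: nat and x assume "n \<le> m" "x \<in> T (real n) -` A"
    then have "T (real m - real n) (T (real n) x) \<in> A" using forward by auto
    then show "x \<in> T (real m) -` A" by (simp add: flow_add[symmetric])
  qed
  then have "emeasure M Z = (SUP n::nat. emeasure M (T (real n) -` A))"
    unfolding Z_def using vimage_sets by (intro SUP_emeasure_incseq[symmetric]) auto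
  also have "\<dots> = emeasure M A" using assms(2) by (simp add: emeasure_flow_vimage)
  finally show ?thesis using Z_trivial by (simp add: measure_def)
qed

section \<open>Separating orbits and return-free sets\<close>

lemma probe_sets: "U \<in> probes \<Longrightarrow> U \<in> sets M"
  unfolding sets_eq_borel by (rule borel_open[OF open_probe])

lemma sets_eq_sigma_probes: "sets M = sigma_sets UNIV probes"
proof -
  have "sets (borel :: 'a measure) = sets (sigma UNIV probes)"
    using borel_eq_countable_basis[OF countable_probes topological_basis_probes] by (rule arg_cong)
  then show ?thesis by (simp add: sets_eq_borel)
qed

text \<open>Occupation times instead of indicators make the probes continuous along orbits, since the
  flow is only jointly measurable.\<close>

definition probe :: "'a set \<Rightarrow> 'a \<Rightarrow> real" where
  "probe U y = occupation_time y U 0 (1/2)"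

lemma measurable_probe[measurable]: "U \<in> sets M \<Longrightarrow> probe U \<in> borel_measurable M"
  unfolding probe_def by measurable

lemma probe_bounds: "0 \<le> probe U y" "probe U y \<le> 1/2"
  unfolding probe_def using occupation_time_nonneg occupation_time_le[of 0 "1/2"] by auto

lemma probe_flow: "U \<in> sets M \<Longrightarrow> probe U (T s y) = occupation_time y U s (s + 1/2)"
  unfolding probe_def by (simp add: occupation_time_flow add.commute)

lemma continuous_on_probe_orbit: "U \<in> sets M \<Longrightarrow> continuous_on S (\<lambda>s. probe U (T s y))"
  unfolding probe_def by (rule continuous_on_occupation_time_orbit) auto

definition orbit_measure :: "'a \<Rightarrow> real \<Rightarrow> real \<Rightarrow> 'a measure" where
  "orbit_measure x a b = distr (density lborel (indicator {a..b})) borel (\<lambda>r. T r x)"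

lemma measurable_orbit_borel: "(\<lambda>r. T r x) \<in> borel_measurable borel"
  using measurable_orbit[of x] by (simp add: measurable_cong_sets[OF refl sets_eq_borel])

lemma sets_orbit_measure: "sets (orbit_measure x a b) = sets M"
  unfolding orbit_measure_def by (simp add: sets_eq_borel)

lemma emeasure_orbit_measure:
  assumes "A \<in> sets M"
  shows "emeasure (orbit_measure x a b) A = occupation x A a b"
proof -
  have A: "A \<in> sets borel" using assms by (simp add: sets_eq_borel)
  have "(\<lambda>r. T r x) \<in> measurable (density lborel (indicator {a..b})) borel"
    using measurable_orbit_borel by (simp add: measurable_cong_sets[OF sets_density refl])
  then have "emeasure (orbit_measure x a b) A
      = emeasure (density lborel (indicator {a..b})) ((\<lambda>r. T r x) -` A)"
    unfolding orbit_measure_def using A by (simp add: emeasure_distr)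
  also have "\<dots> = (\<integral>\<^sup>+r. indicator {a..b} r * indicator ((\<lambda>r. T r x) -` A) r \<partial>lborel)"
    using A measurable_orbit_borel by (subst emeasure_density) (auto intro: measurable_sets_borel)
  also have "\<dots> = occupation x A a b"
    unfolding occupation_def by (intro nn_integral_cong) (auto simp: indicator_def)
  finally show ?thesis .
qed

lemma orbit_measure_eqI_probes:
  assumes "\<And>U. U \<in> probes \<Longrightarrow> occupation x U a b = occupation x U c d"
  shows "orbit_measure x a b = orbit_measure x c d"
proof (rule measure_eqI_generator_eq_countable[of probes UNIV _ _ "{UNIV}"])
  show "emeasure (orbit_measure x a b) U = emeasure (orbit_measure x c d) U" if "U \<in> probes" for U
    using assms[OF that] probe_sets[OF that] by (simp add: emeasure_orbit_measure)
  show "sets (orbit_measure x a b) = sigma_sets UNIV probes"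
    "sets (orbit_measure x c d) = sigma_sets UNIV probes"
    by (simp_all add: sets_orbit_measure sets_eq_sigma_probes)
  show "emeasure (orbit_measure x a b) A \<noteq> \<infinity>" if "A \<in> {UNIV}" for A
    using that occupation_finite[of x UNIV a b] emeasure_orbit_measure[of UNIV x a b] sets.top[of M]
    by (simp add: space_eq_UNIV)
qed (auto simp: Int_stable_probes UNIV_in_probes)

text \<open>By Lusin the orbit map is continuous on a compact set of times of positive measure,
  whose image is then a compact, hence Borel, arc of the orbit.\<close>

lemma ex_orbit_arc_occupation_pos:
  assumes "a < b"
  shows "\<exists>K. K \<subseteq> {a..b} \<and> (\<lambda>r. T r x) ` K \<in> sets M \<and> occupation x ((\<lambda>r. T r x) ` K) a b > 0"
proof -
  obtain K where K: "compact K" "K \<subseteq> {a..b}" "emeasure lborel K > 0" "continuous_on K (\<lambda>r. T r x)"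
    using lusin_positive_compact[OF measurable_orbit_borel assms] by auto
  have "compact ((\<lambda>r. T r x) ` K)" by (rule compact_continuous_image[OF K(4) K(1)])
  then have arc_sets: "(\<lambda>r. T r x) ` K \<in> sets M"
    by (auto simp: sets_eq_borel intro: borel_closed compact_imp_closed)
  have "emeasure lborel K \<le> occupation x ((\<lambda>r. T r x) ` K) a b"
    unfolding occupation_def
  proof (subst nn_integral_indicator[symmetric])
    show "K \<in> sets lborel" using K(1) by (auto intro: borel_closed compact_imp_closed)
    show "integral\<^sup>N lborel (indicator K)
        \<le> (\<integral>\<^sup>+r. indicator {a..b} r * indicator ((\<lambda>r. T r x) ` K) (T r x) \<partial>lborel)"
      using K(2) by (intro nn_integral_mono) (auto simp: indicator_def)
  qed
  with K(2,3) arc_sets show ?thesis by (intro exI[of _ K]) auto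
qed

text \<open>If the probes could not tell \<open>x\<close> from \<open>T s x\<close>, the occupation measures of the time
  windows \<open>[0, 1/2]\<close> and \<open>[s, s + 1/2]\<close> would agree; but the first one charges a compact arc
  of the orbit, which the second one misses because the orbit does not close up.\<close>

lemma probes_separate_orbit:
  assumes aperiodic: "\<forall>t>0. T t x \<noteq> x" and "1 \<le> s"
  shows "\<exists>U\<in>probes. probe U (T s x) \<noteq> probe U x"
proof (rule ccontr)
  assume indistinguishable: "\<not> ?thesis"
  have "occupation x U 0 (1/2) = occupation x U s (s + 1/2)" if "U \<in> probes" for U
  proof -
    have "probe U (T s x) = probe U x" using indistinguishable that by auto
    then have "occupation_time x U s (s + 1/2) = occupation_time x U 0 (1/2)"
      using probe_flow[OF probe_sets[OF that], of s x] unfolding probe_def by simp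
    then show ?thesis by (simp add: occupation_eq_ennreal)
  qed
  then have same: "orbit_measure x 0 (1/2) = orbit_measure x s (s + 1/2)"
    by (rule orbit_measure_eqI_probes)
  obtain K where K: "K \<subseteq> {0..1/2}" and arc_sets: "(\<lambda>r. T r x) ` K \<in> sets M"
    and charged: "occupation x ((\<lambda>r. T r x) ` K) 0 (1/2) > 0"
    using ex_orbit_arc_occupation_pos[of 0 "1/2" x] by auto
  have misses: "indicator {s..s+1/2} r * indicator ((\<lambda>r. T r x) ` K) (T r x) = (0::ennreal)" for r
  proof (cases "r \<in> {s..s+1/2} \<and> T r x \<in> (\<lambda>r. T r x) ` K")
    case True
    then obtain k where k: "k \<in> K" "T r x = T k x" by auto
    have "r - k > 0" using True k(1) K \<open>1 \<le> s\<close> by auto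
    moreover have "T (r - k) x = x"
      using flow_add[of "- k" r x] k(2) by simp
    ultimately show ?thesis using aperiodic by auto
  qed (auto simp: indicator_def)
  have "occupation x ((\<lambda>r. T r x) ` K) s (s + 1/2) = 0"
    unfolding occupation_def by (simp add: misses)
  with charged same arc_sets show False by (simp add: emeasure_orbit_measure[symmetric])
qed

definition probe_dist :: "'a set set \<Rightarrow> 'a \<Rightarrow> 'a \<Rightarrow> real" where
  "probe_dist F y z = (\<Sum>U\<in>F. \<bar>probe U z - probe U y\<bar>)"

lemma continuous_on_probe_dist_orbit:
  "F \<subseteq> probes \<Longrightarrow> continuous_on S (\<lambda>s. probe_dist F y (T s y))"
  unfolding probe_dist_def
  by (intro continuous_on_sum continuous_on_rabs continuous_on_diff continuous_on_const
      continuous_on_probe_orbit) (auto intro: probe_sets)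

lemma measurable_probe_dist_orbit[measurable]:
  "F \<subseteq> probes \<Longrightarrow> (\<lambda>y. probe_dist F y (T s y)) \<in> borel_measurable M"
  unfolding probe_dist_def
  by (intro borel_measurable_sum borel_measurable_abs borel_measurable_diff
      measurable_compose[OF measurable_flow measurable_probe] measurable_probe)
    (auto intro: probe_sets)

text \<open>Compactness of \<open>[1, L]\<close> turns the pointwise separation into a uniform one by finitely
  many probes.\<close>

lemma finite_probe_separation:
  assumes aperiodic: "\<forall>t>0. T t x \<noteq> x" and "1 \<le> L"
  shows "\<exists>F k. finite F \<and> F \<subseteq> probes \<and> k > (0::nat)
    \<and> (\<forall>s\<in>{1..L}. 1 / real k \<le> probe_dist F x (T s x))"
proof -
  define Sep where "Sep U = {s. probe U (T s x) \<noteq> probe U x}" for U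
  have open_Sep: "open B" if B: "B \<in> Sep ` probes" for B
  proof -
    obtain U where U: "U \<in> probes" "B = Sep U" using B by auto
    show ?thesis unfolding U(2) Sep_def
      by (intro open_Collect_neq continuous_on_probe_orbit continuous_on_const probe_sets U(1))
  qed
  have "{1..L} \<subseteq> \<Union>(Sep ` probes)"
  proof
    fix s assume "s \<in> {1..L}"
    then obtain U where "U \<in> probes" "probe U (T s x) \<noteq> probe U x"
      using probes_separate_orbit[OF aperiodic, of s] by auto
    then show "s \<in> \<Union>(Sep ` probes)" unfolding Sep_def by auto
  qed
  then obtain \<O> where \<O>: "\<O> \<subseteq> Sep ` probes" "finite \<O>" "{1..L} \<subseteq> \<Union>\<O>"
    using compactE[OF compact_Icc _ open_Sep] by metis
  obtain F where F: "F \<subseteq> probes" "finite F" "\<O> = Sep ` F"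
    using finite_subset_image[OF \<O>(2,1)] by auto
  have pos: "probe_dist F x (T s x) > 0" if s: "s \<in> {1..L}" for s
  proof -
    obtain U where U: "U \<in> F" "s \<in> Sep U" using \<O>(3) s F(3) by auto
    show ?thesis unfolding probe_dist_def
      by (rule sum_pos2[OF F(2) U(1)]) (use U(2) in \<open>auto simp: Sep_def\<close>)
  qed
  obtain s0 where s0: "s0 \<in> {1..L}" "\<And>s. s \<in> {1..L} \<Longrightarrow> probe_dist F x (T s0 x) \<le> probe_dist F x (T s x)"
    using continuous_attains_inf[OF compact_Icc _ continuous_on_probe_dist_orbit[OF F(1)], of 1 L x]
      \<open>1 \<le> L\<close> by auto
  obtain k :: nat where k: "k > 0" "inverse (real k) < probe_dist F x (T s0 x)"
    using ex_inverse_of_nat_less[OF pos[OF s0(1)]] by auto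
  show ?thesis
  proof (intro exI conjI ballI)
    show "finite F" "F \<subseteq> probes" "k > 0" using F k by auto
    fix s assume "s \<in> {1..L}"
    then show "1 / real k \<le> probe_dist F x (T s x)"
      using s0(2)[of s] k(2) by (simp add: divide_inverse)
  qed
qed

definition probe_separated :: "'a set set \<Rightarrow> nat \<Rightarrow> real \<Rightarrow> 'a set" where
  "probe_separated F k L = {y. \<forall>q. 1 \<le> real_of_rat q \<and> real_of_rat q \<le> L
     \<longrightarrow> 1 / real k \<le> probe_dist F y (T (real_of_rat q) y)}"

lemma probe_separated_sets[measurable]: "F \<subseteq> probes \<Longrightarrow> probe_separated F k L \<in> sets M"
proof -
  assume F: "F \<subseteq> probes"
  have [measurable]: "\<And>s. (\<lambda>y. probe_dist F y (T s y)) \<in> borel_measurable M"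
    using measurable_probe_dist_orbit[OF F] .
  have "Measurable.pred M (\<lambda>y. \<forall>q. 1 \<le> real_of_rat q \<and> real_of_rat q \<le> L
      \<longrightarrow> 1 / real k \<le> probe_dist F y (T (real_of_rat q) y))"
    by measurable
  then show ?thesis unfolding probe_separated_def by (simp add: pred_def space_eq_UNIV)
qed

lemma probe_separated_interval:
  assumes F: "F \<subseteq> probes" and y: "y \<in> probe_separated F k L" and s: "s \<in> {1..L}"
  shows "1 / real k \<le> probe_dist F y (T s y)"
proof (rule ccontr)
  assume "\<not> ?thesis"
  then have "- (1 / real k) < - probe_dist F y (T s y)" by simp
  moreover have "continuous_on {1..L} (\<lambda>s. - probe_dist F y (T s y))"
    by (intro continuous_on_minus continuous_on_probe_dist_orbit F)
  ultimately obtain q :: rat where q: "of_rat q \<in> {1..L}" "probe_dist F y (T (of_rat q) y) < 1 / real k"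
  proof (cases "L = 1")
    case True
    with s have "s = of_rat 1" by auto
    with that \<open>- (1 / real k) < - probe_dist F y (T s y)\<close> True show ?thesis by auto
  next
    case False
    with s have "1 < L" by auto
    from rat_witness_in_interval[OF \<open>continuous_on {1..L} _\<close> this s \<open>- (1 / real k) < _\<close>]
    obtain q where "real_of_rat q \<in> {1..L}" "- (1 / real k) < - probe_dist F y (T (real_of_rat q) y)"
      by blast
    with that show ?thesis by simp
  qed
  moreover have "1 / real k \<le> probe_dist F y (T (real_of_rat q) y)"
    using y q(1) unfolding probe_separated_def by auto
  ultimately show False by simp
qed

lemma ex_probe_separated_pos:
  assumes "aperiodic_flow M T" and "1 \<le> L"
  shows "\<exists>F k. finite F \<and> F \<subseteq> probes \<and> k > 0 \<and> emeasure M (probe_separated F k L) > 0"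
proof (rule ccontr)
  assume "\<not> ?thesis"
  then have null: "emeasure M (probe_separated F k L) = 0" if "finite F" "F \<subseteq> probes" "k > 0" for F k
    using that by (metis not_gr_zero)
  define I where "I = {F. finite F \<and> F \<subseteq> (probes :: 'a set set)} \<times> {k::nat. k > 0}"
  have "countable I"
    unfolding I_def by (intro countable_SIGMA countable_Collect_finite_subset countable_probes) auto
  have "\<forall>p\<in>I. AE x in M. x \<notin> probe_separated (fst p) (snd p) L"
  proof
    fix p assume "p \<in> I"
    then have "probe_separated (fst p) (snd p) L \<in> null_sets M"
      using null unfolding I_def by (auto simp: null_sets_def)
    then show "AE x in M. x \<notin> probe_separated (fst p) (snd p) L" by (rule AE_not_in)
  qed
  then have "AE x in M. \<forall>p\<in>I. x \<notin> probe_separated (fst p) (snd p) L"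
    by (subst AE_ball_countable[OF \<open>countable I\<close>])
  then have "AE x in M. False"
    using assms(1) unfolding aperiodic_flow_def
  proof eventually_elim
    case (elim x)
    obtain F k where Fk: "finite F" "F \<subseteq> probes" "k > 0"
        "\<forall>s\<in>{1..L}. 1 / real k \<le> probe_dist F x (T s x)"
      using finite_probe_separation[OF elim(2) \<open>1 \<le> L\<close>] by auto
    then have "x \<in> probe_separated F k L" unfolding probe_separated_def by auto
    moreover have "(F, k) \<in> I" unfolding I_def using Fk by auto
    ultimately show False using elim(1) by auto
  qed
  then show False using emeasure_space_1 by (simp add: AE_False)
qed

definition probe_cell :: "'a set set \<Rightarrow> real \<Rightarrow> ('a set \<Rightarrow> int) \<Rightarrow> 'a set" where
  "probe_cell F N c = {y. \<forall>U\<in>F. real_of_int (c U) \<le> probe U y * N \<and> probe U y * N < real_of_int (c U) + 1}"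

lemma probe_cell_sets:
  assumes "finite F" "F \<subseteq> probes"
  shows "probe_cell F N c \<in> sets M"
proof -
  have "Measurable.pred M (\<lambda>y. \<forall>U\<in>F. real_of_int (c U) \<le> probe U y * N
      \<and> probe U y * N < real_of_int (c U) + 1)"
  proof (rule pred_intros_finite(3)[OF assms(1)])
    fix U assume "U \<in> F"
    then have [measurable]: "probe U \<in> borel_measurable M"
      using assms(2) by (intro measurable_probe probe_sets) auto
    show "Measurable.pred M (\<lambda>y. real_of_int (c U) \<le> probe U y * N
        \<and> probe U y * N < real_of_int (c U) + 1)"
      by measurable
  qed
  then show ?thesis unfolding probe_cell_def by (simp add: pred_def space_eq_UNIV)
qed

lemma probe_cells_cover:
  assumes "0 < N"
  shows "y \<in> (\<Union>c\<in>PiE F (\<lambda>_. {0..\<lfloor>N\<rfloor>}). probe_cell F N c)"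
proof -
  define c where "c = restrict (\<lambda>U. \<lfloor>probe U y * N\<rfloor>) F"
  have "0 \<le> \<lfloor>probe U y * N\<rfloor> \<and> \<lfloor>probe U y * N\<rfloor> \<le> \<lfloor>N\<rfloor>" for U
  proof -
    have "0 \<le> probe U y * N" using probe_bounds(1) assms by simp
    moreover have "probe U y * N \<le> N"
      using probe_bounds(2)[of U y] assms by (simp add: mult_le_cancel_right1)
    ultimately show ?thesis by (auto intro: floor_mono)
  qed
  then have "c \<in> PiE F (\<lambda>_. {0..\<lfloor>N\<rfloor>})" unfolding c_def by auto
  moreover have "y \<in> probe_cell F N c" unfolding probe_cell_def c_def using floor_correct by auto
  ultimately show ?thesis by auto
qed

lemma probe_dist_cell_le:
  assumes "y \<in> probe_cell F N c" "z \<in> probe_cell F N c" "0 < N"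
  shows "probe_dist F y z \<le> real (card F) / N"
proof -
  have "\<bar>probe U z - probe U y\<bar> \<le> 1 / N" if U: "U \<in> F" for U
  proof -
    have "real_of_int (c U) \<le> probe U y * N" "probe U y * N < real_of_int (c U) + 1"
      "real_of_int (c U) \<le> probe U z * N" "probe U z * N < real_of_int (c U) + 1"
      using assms(1,2) U unfolding probe_cell_def by auto
    then have "\<bar>probe U z * N - probe U y * N\<bar> \<le> 1" by linarith
    then have "\<bar>probe U z - probe U y\<bar> * N \<le> 1"
      using assms(3) by (simp add: abs_mult left_diff_distrib[symmetric])
    then show ?thesis using assms(3) by (simp add: field_simps)
  qed
  then have "probe_dist F y z \<le> (\<Sum>U\<in>F. 1 / N)" unfolding probe_dist_def by (intro sum_mono)
  then show ?thesis by simp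
qed

text \<open>Sort the points of a positive-measure set of uniformly probe-separated points into cells
  of probe values narrower than the separation; a cell meeting that set in positive measure is
  never revisited at times in \<open>[1, L]\<close>.\<close>

lemma ex_return_free_set:
  assumes "aperiodic_flow M T" and "1 \<le> L"
  shows "\<exists>D\<in>sets M. emeasure M D > 0 \<and> (\<forall>y\<in>D. \<forall>s\<in>{1..L}. T s y \<notin> D)"
proof -
  obtain F k where Fk: "finite F" "F \<subseteq> probes" "k > 0" "emeasure M (probe_separated F k L) > 0"
    using ex_probe_separated_pos[OF assms] by auto
  define G where "G = probe_separated F k L"
  define N where "N = real k * (real (card F) + 1)"
  have "N > 0" unfolding N_def using Fk(3) by (simp add: add_pos_nonneg)
  have finite_cells: "finite (PiE F (\<lambda>_. {0..\<lfloor>N\<rfloor>}))" using Fk(1) by (intro finite_PiE) auto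
  have cover: "G \<subseteq> (\<Union>c\<in>PiE F (\<lambda>_. {0..\<lfloor>N\<rfloor>}). probe_cell F N c)"
    by (intro subsetI probe_cells_cover[OF \<open>N > 0\<close>])
  have G_sets: "G \<in> sets M" unfolding G_def using probe_separated_sets[OF Fk(2)] .
  obtain c where pos: "emeasure M (G \<inter> probe_cell F N c) > 0"
    using ex_emeasure_Int_pos[OF finite_cells cover G_sets probe_cell_sets[OF Fk(1,2)] Fk(4)[folded G_def]]
    by blast
  have no_return: "T s y \<notin> G \<inter> probe_cell F N c"
    if y: "y \<in> G \<inter> probe_cell F N c" and s: "s \<in> {1..L}" for y s
  proof
    assume Ty: "T s y \<in> G \<inter> probe_cell F N c"
    have "probe_dist F y (T s y) \<le> real (card F) / N"
      using probe_dist_cell_le[of y F N c "T s y"] y Ty \<open>N > 0\<close> by auto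
    also have "\<dots> < 1 / real k"
    proof -
      have "real (card F) * real k < N" unfolding N_def using Fk(3) by (simp add: algebra_simps)
      then show ?thesis using \<open>N > 0\<close> Fk(3) by (simp add: field_simps)
    qed
    finally have "probe_dist F y (T s y) < 1 / real k" .
    moreover have "1 / real k \<le> probe_dist F y (T s y)"
      using probe_separated_interval[OF Fk(2) _ s] y unfolding G_def by auto
    ultimately show False by simp
  qed
  show ?thesis
    by (intro bexI[of _ "G \<inter> probe_cell F N c"] conjI pos ballI no_return)
      (use G_sets probe_cell_sets[OF Fk(1,2)] in auto)
qed

end

section \<open>Entry towers over a return-free set\<close>

locale return_free_set = standard_flow +
  fixes D :: "'a set" and L :: nat
  assumes D_sets[measurable]: "D \<in> sets M" and D_pos: "emeasure M D > 0" and L_pos: "1 \<le> L"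
    and return_free: "\<And>y s. y \<in> D \<Longrightarrow> 1 \<le> s \<Longrightarrow> s \<le> real L + 3 \<Longrightarrow> T s y \<notin> D"
begin

text \<open>A continuous-along-orbits substitute for the indicator of \<open>D\<close>.\<close>

definition presence :: "'a \<Rightarrow> real" where
  "presence y = occupation_time y D 0 1"

lemma presence_nonneg: "0 \<le> presence y"
  unfolding presence_def by (rule occupation_time_nonneg)

lemma measurable_presence[measurable]: "presence \<in> borel_measurable M"
  unfolding presence_def by measurable

lemma presence_flow: "presence (T t x) = occupation_time x D t (t + 1)"
  unfolding presence_def by (simp add: occupation_time_flow add.commute)

lemma continuous_on_presence_orbit: "continuous_on S (\<lambda>t. presence (T t x))"
  unfolding presence_def by (rule continuous_on_occupation_time_orbit) auto

lemma presence_pos_visit: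
  assumes "presence (T t x) > 0"
  shows "\<exists>r\<in>{t..t+1}. T r x \<in> D"
proof (rule ccontr)
  assume "\<not> ?thesis"
  then have "occupation x D t (t + 1) = 0" unfolding occupation_def
    by (subst nn_integral_0_iff_AE) (auto simp: indicator_def)
  then show False using assms by (simp add: presence_flow occupation_time_def)
qed

lemma presence_pos_rat:
  assumes "presence (T t x) > 0" and "t < b"
  shows "\<exists>q. t \<le> real_of_rat q \<and> real_of_rat q < b \<and> presence (T (real_of_rat q) x) > 0"
proof -
  have "t < (t + b) / 2" "t \<in> {t..(t + b) / 2}" using \<open>t < b\<close> by auto
  from rat_witness_in_interval[OF continuous_on_presence_orbit this assms(1)]
  show ?thesis using \<open>t < b\<close> by force
qed

definition first_entry :: "real \<Rightarrow> real \<Rightarrow> 'a set" where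
  "first_entry a b = {x. (\<forall>t. 0 \<le> t \<and> t < a \<longrightarrow> presence (T t x) = 0)
     \<and> (\<exists>t. a \<le> t \<and> t < b \<and> presence (T t x) > 0)}"

lemma presence_orbit_zero_iff_rat:
  "(\<forall>t. 0 \<le> t \<and> t < a \<longrightarrow> presence (T t x) = 0)
    \<longleftrightarrow> (\<forall>q. 0 \<le> real_of_rat q \<and> real_of_rat q < a \<longrightarrow> presence (T (real_of_rat q) x) = 0)"
proof safe
  fix t assume rat: "\<forall>q. 0 \<le> real_of_rat q \<and> real_of_rat q < a \<longrightarrow> presence (T (real_of_rat q) x) = 0"
    and t: "0 \<le> t" "t < a"
  show "presence (T t x) = 0"
  proof (rule ccontr)
    assume "presence (T t x) \<noteq> 0"
    then have "presence (T t x) > 0" using presence_nonneg[of "T t x"] by auto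
    then obtain q where q: "t \<le> real_of_rat q" "real_of_rat q < a" "presence (T (real_of_rat q) x) > 0"
      using presence_pos_rat \<open>t < a\<close> by blast
    then have "0 \<le> real_of_rat q \<and> real_of_rat q < a" using t by linarith
    with rat have "presence (T (real_of_rat q) x) = 0" by blast
    with q(3) show False by simp
  qed
qed auto

lemma presence_orbit_pos_iff_rat:
  "(\<exists>t. a \<le> t \<and> t < b \<and> presence (T t x) > 0)
    \<longleftrightarrow> (\<exists>q. a \<le> real_of_rat q \<and> real_of_rat q < b \<and> presence (T (real_of_rat q) x) > 0)"
  using presence_pos_rat by (meson order_trans)

lemma first_entry_sets[measurable]: "first_entry a b \<in> sets M"
proof -
  have "Measurable.pred M (\<lambda>x.
      (\<forall>q. 0 \<le> real_of_rat q \<and> real_of_rat q < a \<longrightarrow> presence (T (real_of_rat q) x) = 0)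
    \<and> (\<exists>q. a \<le> real_of_rat q \<and> real_of_rat q < b \<and> presence (T (real_of_rat q) x) > 0))"
    by measurable
  then show ?thesis
    unfolding first_entry_def presence_orbit_zero_iff_rat presence_orbit_pos_iff_rat
    by (simp add: pred_def space_eq_UNIV)
qed

lemma first_entry_flow: "0 \<le> c \<Longrightarrow> x \<in> first_entry (a + c) (b + c) \<Longrightarrow> T c x \<in> first_entry a b"
  unfolding first_entry_def
proof safe
  fix t assume "0 \<le> c" and absent: "\<forall>t. 0 \<le> t \<and> t < a + c \<longrightarrow> presence (T t x) = 0"
    and t: "0 \<le> t" "t < a"
  have "presence (T (t + c) x) = 0" using absent t \<open>0 \<le> c\<close> by auto
  then show "presence (T t (T c x)) = 0" by (simp add: flow_add)
next
  fix t assume "a + c \<le> t" "t < b + c" "0 < presence (T t x)"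
  moreover have "T (t - c) (T c x) = T t x" by (simp add: flow_add[symmetric])
  ultimately show "\<exists>t. a \<le> t \<and> t < b \<and> 0 < presence (T t (T c x))"
    by (intro exI[of _ "t - c"]) auto
qed

lemma measure_first_entry_shift_le:
  assumes "0 \<le> c"
  shows "measure M (first_entry (a + c) (b + c)) \<le> measure M (first_entry a b)"
proof -
  have "first_entry (a + c) (b + c) \<subseteq> T c -` first_entry a b"
    using first_entry_flow[OF assms] by auto
  then have "measure M (first_entry (a + c) (b + c)) \<le> measure M (T c -` first_entry a b)"
    using measurable_sets[OF measurable_flow first_entry_sets]
    by (intro finite_measure_mono) (auto simp: space_eq_UNIV)
  also have "\<dots> = measure M (first_entry a b)" by (rule measure_flow_vimage) simp
  finally show ?thesis .
qed

lemma first_entry_disjoint: "0 \<le> a \<Longrightarrow> b \<le> a' \<Longrightarrow> first_entry a b \<inter> first_entry a' b' = {}"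
  unfolding first_entry_def by force

text \<open>Every entry time in \<open>[0, L]\<close> is followed within time \<open>2\<close> by a visit to \<open>D\<close>, and two
  visits are less than \<open>1\<close> apart by return-freeness, so an orbit segment of length \<open>L\<close>
  spends at most time \<open>4\<close> in \<open>first_entry 0 1\<close>; integrate over the space.\<close>

lemma measure_first_entry_0_1: "real L * measure M (first_entry 0 1) \<le> 4"
proof -
  have orbit_bound: "(\<integral>\<^sup>+s. indicator {0..real L} s * indicator (first_entry 0 1) (T s x) \<partial>lborel) \<le> 4"
    for x
  proof (cases "\<exists>s1\<in>{0..real L}. T s1 x \<in> first_entry 0 1")
    case False
    then have "(\<lambda>s. indicator {0..real L} s * indicator (first_entry 0 1) (T s x)) = (\<lambda>s. 0::ennreal)"
      by (auto simp: indicator_def)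
    then show ?thesis by simp
  next
    case True
    then obtain s1 where s1: "s1 \<in> {0..real L}" "T s1 x \<in> first_entry 0 1" by auto
    have visit: "\<exists>r\<in>{s..s+2}. T r x \<in> D" if entry: "T s x \<in> first_entry 0 1" for s
    proof -
      obtain t where t: "0 \<le> t" "t < 1" "presence (T t (T s x)) > 0"
        using entry unfolding first_entry_def by auto
      then have "presence (T (t + s) x) > 0" by (simp add: flow_add)
      then obtain r where "r \<in> {t+s..t+s+1}" "T r x \<in> D" using presence_pos_visit by blast
      then show ?thesis using t by (intro bexI[of _ r]) auto
    qed
    obtain r1 where r1: "r1 \<in> {s1..s1+2}" "T r1 x \<in> D" using visit[OF s1(2)] by auto
    have close: "s \<in> {r1 - 3..r1 + 1}" if s: "s \<in> {0..real L}" "T s x \<in> first_entry 0 1" for s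
    proof -
      obtain r2 where r2: "r2 \<in> {s..s+2}" "T r2 x \<in> D" using visit[OF s(2)] by auto
      have no_return: False if rr': "r \<in> {r1, r2}" "r' \<in> {r1, r2}" "1 \<le> r' - r" for r r'
      proof -
        have "r' - r \<le> real L + 3" using rr' r1 r2 s s1 by auto
        then have "T (r' - r) (T r x) \<notin> D" using return_free rr' r1 r2 by auto
        moreover have "T (r' - r) (T r x) = T r' x" by (simp add: flow_add[symmetric])
        ultimately show False using rr' r1 r2 by auto
      qed
      have "\<bar>r2 - r1\<bar> < 1" using no_return[of r1 r2] no_return[of r2 r1] by fastforce
      then show ?thesis using r2 by auto
    qed
    have "(\<integral>\<^sup>+s. indicator {0..real L} s * indicator (first_entry 0 1) (T s x) \<partial>lborel)
        \<le> (\<integral>\<^sup>+s. indicator {r1 - 3..r1 + 1} s \<partial>lborel)"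
      using close by (intro nn_integral_mono) (auto simp: indicator_def)
    also have "\<dots> = 4" by simp
    finally show ?thesis .
  qed
  have "ennreal (real L) * emeasure M (first_entry 0 1)
      = (\<integral>\<^sup>+x. \<integral>\<^sup>+s. indicator {0..real L} s * indicator (first_entry 0 1) (T s x) \<partial>lborel \<partial>M)"
    using nn_integral_orbit_segment[of "indicator (first_entry 0 1)" 0 "real L"] by simp
  also have "\<dots> \<le> (\<integral>\<^sup>+x. 4 \<partial>M)" by (intro nn_integral_mono orbit_bound)
  also have "\<dots> = 4" by (simp add: emeasure_space_1)
  finally have "ennreal (real L * measure M (first_entry 0 1)) \<le> ennreal 4"
    by (simp add: emeasure_eq_measure ennreal_mult)
  then show ?thesis by (subst (asm) ennreal_le_iff) auto
qed

lemma disjoint_family_first_entry: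
  assumes "\<And>m n. m < n \<Longrightarrow> f m + 1 \<le> f n" and "\<And>n. 0 \<le> f n"
  shows "disjoint_family (\<lambda>n::nat. first_entry (f n) (f n + 1))"
  unfolding disjoint_family_on_def
proof (intro ballI impI)
  fix m n :: nat assume "m \<noteq> n"
  then show "first_entry (f m) (f m + 1) \<inter> first_entry (f n) (f n + 1) = {}"
    using first_entry_disjoint[OF assms(2) assms(1), of m n] first_entry_disjoint[OF assms(2) assms(1), of n m]
    by (cases "m < n") auto
qed

definition tower_floor :: "nat \<Rightarrow> 'a set" where
  "tower_floor k = first_entry (real (k * L)) (real (k * L) + 1)"

definition entry_tower :: "'a set" where
  "entry_tower = (\<Union>k. tower_floor k)"

lemma tower_floor_sets[measurable]: "tower_floor k \<in> sets M"
  unfolding tower_floor_def by measurable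

lemma entry_tower_sets[measurable]: "entry_tower \<in> sets M"
  unfolding entry_tower_def by measurable

lemma disjoint_family_tower_floor: "disjoint_family tower_floor"
  unfolding tower_floor_def[abs_def]
proof (rule disjoint_family_first_entry)
  fix m n :: nat assume "m < n"
  then have "m * L + L \<le> n * L" using mult_le_mono1[of "Suc m" n L] by simp
  then show "real (m * L) + 1 \<le> real (n * L)" using L_pos by linarith
qed simp

text \<open>The floors above the ground floor are dominated, one by one, by the \<open>L\<close> disjoint sets
  \<open>first_entry j (j + 1)\<close> with \<open>j\<close> in the block of times just below them.\<close>

lemma measure_upper_floors: "real L * (\<Sum>k<K. measure M (tower_floor (Suc k))) \<le> 1"
proof -
  have disj_unit: "disjoint_family (\<lambda>j::nat. first_entry (real j) (real j + 1))"
    by (rule disjoint_family_first_entry) auto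
  have "real L * (\<Sum>k<K. measure M (tower_floor (Suc k)))
      = (\<Sum>k<K. \<Sum>j\<in>{k*L..<k*L+L}. measure M (tower_floor (Suc k)))"
    by (simp add: sum_distrib_left)
  also have "\<dots> \<le> (\<Sum>k<K. \<Sum>j\<in>{k*L..<k*L+L}. measure M (first_entry (real j) (real j + 1)))"
  proof (intro sum_mono)
    fix k j assume j: "j \<in> {k*L..<k*L+L}"
    define c where "c = real (Suc k * L) - real j"
    have "j \<le> Suc k * L" using j by auto
    then have "real j \<le> real (Suc k * L)" by (simp only: of_nat_le_iff)
    then have "0 \<le> c" unfolding c_def by linarith
    moreover have "tower_floor (Suc k) = first_entry (real j + c) (real j + 1 + c)"
      unfolding tower_floor_def c_def by (simp add: algebra_simps)
    ultimately show "measure M (tower_floor (Suc k)) \<le> measure M (first_entry (real j) (real j + 1))"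
      using measure_first_entry_shift_le by simp
  qed
  also have "\<dots> = (\<Sum>j<K*L. measure M (first_entry (real j) (real j + 1)))"
    by (rule sum.nat_group)
  also have "\<dots> = measure M (\<Union>j<K*L. first_entry (real j) (real j + 1))"
    by (rule measure_finite_Union[symmetric]) (use disj_unit in \<open>auto simp: disjoint_family_on_def\<close>)
  also have "\<dots> \<le> 1" by simp
  finally show ?thesis .
qed

lemma measure_entry_tower: "real L * measure M entry_tower \<le> 5"
proof -
  have "(\<lambda>k. measure M (tower_floor k)) sums measure M entry_tower"
    unfolding entry_tower_def
    by (rule measure_UNION) (use disjoint_family_tower_floor in auto)
  then have lim: "(\<lambda>n. real L * (\<Sum>k<n. measure M (tower_floor k))) \<longlonglongrightarrow> real L * measure M entry_tower"
    unfolding sums_def by (intro tendsto_mult_left)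
  have partial: "real L * (\<Sum>k<Suc K. measure M (tower_floor k)) \<le> 5" for K
  proof -
    have "real L * (\<Sum>k<Suc K. measure M (tower_floor k))
        = real L * measure M (first_entry 0 1) + real L * (\<Sum>k<K. measure M (tower_floor (Suc k)))"
      by (subst sum.lessThan_Suc_shift) (simp add: tower_floor_def algebra_simps)
    also have "\<dots> \<le> 4 + 1" using measure_upper_floors measure_first_entry_0_1 by (intro add_mono)
    finally show ?thesis by simp
  qed
  have "real L * (\<Sum>k<n. measure M (tower_floor k)) \<le> 5" if "n \<ge> 1" for n
    using partial[of "n - 1"] that by simp
  with lim show ?thesis by (intro LIMSEQ_le_const2) auto
qed

definition never_present :: "'a set" where
  "never_present = {x. \<forall>t\<ge>0. presence (T t x) = 0}"

lemma never_present_sets[measurable]: "never_present \<in> sets M"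
proof -
  have "(\<forall>t\<ge>0. P t) \<longleftrightarrow> (\<forall>n::nat. \<forall>t. 0 \<le> t \<and> t < real n \<longrightarrow> P t)" for P :: "real \<Rightarrow> bool"
    by (meson reals_Archimedean2)
  then have eq: "never_present = {x. \<forall>n::nat. \<forall>t. 0 \<le> t \<and> t < real n \<longrightarrow> presence (T t x) = 0}"
    unfolding never_present_def by simp
  have "Measurable.pred M (\<lambda>x. \<forall>n::nat. \<forall>q. 0 \<le> real_of_rat q \<and> real_of_rat q < real n
      \<longrightarrow> presence (T (real_of_rat q) x) = 0)"
    by measurable
  then show ?thesis
    unfolding eq presence_orbit_zero_iff_rat by (simp add: pred_def space_eq_UNIV)
qed

lemma never_present_flow: "x \<in> never_present \<Longrightarrow> 0 \<le> c \<Longrightarrow> T c x \<in> never_present"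
  unfolding never_present_def by (auto simp: flow_add[symmetric])

lemma presence_pos_sets[measurable]: "{x. presence x > 0} \<in> sets M"
proof -
  have "{x \<in> space M. presence x > 0} \<in> sets M" by measurable
  then show ?thesis by (simp add: space_eq_UNIV)
qed

lemma emeasure_presence_pos: "emeasure M {x. presence x > 0} > 0"
proof (rule ccontr)
  assume "\<not> ?thesis"
  then have "{x. presence x > 0} \<in> null_sets M" by (auto simp: null_sets_def not_gr_zero)
  then have "AE x in M. x \<notin> {x. presence x > 0}" by (rule AE_not_in)
  then have "AE x in M. occupation x D 0 1 = 0"
  proof eventually_elim
    case (elim x)
    then have "presence x = 0" using presence_nonneg[of x] by auto
    then show ?case by (simp add: presence_def occupation_eq_ennreal)
  qed
  then have "(\<integral>\<^sup>+x. occupation x D 0 1 \<partial>M) = 0" by (simp add: nn_integral_0_iff_AE)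
  moreover have "(\<integral>\<^sup>+x. occupation x D 0 1 \<partial>M) = emeasure M D"
    unfolding occupation_def using nn_integral_orbit_segment[of "indicator D" 0 1] by simp
  ultimately show False using D_pos by simp
qed

lemma never_present_null:
  assumes "ergodic_flow M T"
  shows "measure M never_present = 0"
proof -
  have "never_present \<inter> {x. presence x > 0} = {}"
    unfolding never_present_def using flow_zero by force
  then have "measure M never_present + measure M {x. presence x > 0}
      = measure M (never_present \<union> {x. presence x > 0})"
    by (intro finite_measure_Union[symmetric]) auto
  also have "\<dots> \<le> 1" by simp
  finally have "measure M never_present < 1"
    using emeasure_presence_pos by (simp add: emeasure_eq_measure)
  then show ?thesis
    using measure_forward_invariant_trivial[OF assms never_present_sets never_present_flow] by auto
qed

lemma flow_mem_first_entry:
  assumes absent: "\<And>\<tau>. 0 \<le> \<tau> \<Longrightarrow> \<tau> < e \<Longrightarrow> presence (T \<tau> x) = 0"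
    and soon: "\<And>\<epsilon>. 0 < \<epsilon> \<Longrightarrow> \<exists>v. e \<le> v \<and> v < e + \<epsilon> \<and> presence (T v x) > 0"
    and "0 \<le> s" "a + s \<le> e" "e < a + 1 + s"
  shows "T s x \<in> first_entry a (a + 1)"
  unfolding first_entry_def
proof (intro CollectI conjI allI impI)
  fix \<tau> assume "0 \<le> \<tau> \<and> \<tau> < a"
  then show "presence (T \<tau> (T s x)) = 0"
    using absent[of "\<tau> + s"] assms(3,4) by (simp add: flow_add)
next
  obtain v where v: "e \<le> v" "v < a + 1 + s" "presence (T v x) > 0"
    using soon[of "a + 1 + s - e"] assms(5) by auto
  moreover have "T (v - s) (T s x) = T v x" by (simp add: flow_add[symmetric])
  ultimately show "\<exists>t. a \<le> t \<and> t < a + 1 \<and> 0 < presence (T t (T s x))"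
    using assms(4) by (intro exI[of _ "v - s"]) auto
qed

text \<open>If the first time of presence of \<open>x\<close> is \<open>e \<ge> 1\<close>, write \<open>e - 1 = k L + t\<close> with
  \<open>0 \<le> t < L\<close>; along \<open>(t, t + 1]\<close> the orbit lies in the floor \<open>first_entry (k L) (k L + 1)\<close>.\<close>

lemma window_in_entry_tower:
  assumes "x \<notin> never_present" and "x \<notin> first_entry 0 1"
  shows "\<exists>t. 0 \<le> t \<and> t < real L \<and> (\<forall>s. t < s \<and> s \<le> t + 1 \<longrightarrow> T s x \<in> entry_tower)"
proof -
  define S where "S = {t. 0 \<le> t \<and> presence (T t x) > 0}"
  obtain t0 where "0 \<le> t0" "presence (T t0 x) \<noteq> 0"
    using assms(1) unfolding never_present_def by auto
  then have "t0 \<in> S" using presence_nonneg[of "T t0 x"] unfolding S_def by auto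
  then have "S \<noteq> {}" by auto
  have "bdd_below S" unfolding S_def by (auto intro: bdd_belowI[of _ 0])
  define e where "e = Inf S"
  have e_le: "e \<le> t" if "t \<in> S" for t
    unfolding e_def using that \<open>bdd_below S\<close> by (rule cInf_lower)
  have soon: "\<exists>v. e \<le> v \<and> v < e + \<epsilon> \<and> presence (T v x) > 0" if \<epsilon>: "0 < \<epsilon>" for \<epsilon>
  proof -
    obtain v where "v \<in> S" "v < e + \<epsilon>"
      using cInf_less_iff[OF \<open>S \<noteq> {}\<close> \<open>bdd_below S\<close>, of "e + \<epsilon>"] \<epsilon> unfolding e_def by auto
    then show ?thesis using e_le unfolding S_def by auto
  qed
  have absent: "presence (T \<tau> x) = 0" if \<tau>: "0 \<le> \<tau>" "\<tau> < e" for \<tau>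
  proof (rule ccontr)
    assume "presence (T \<tau> x) \<noteq> 0"
    then have "\<tau> \<in> S" using \<tau> presence_nonneg[of "T \<tau> x"] unfolding S_def by auto
    then show False using e_le \<tau>(2) by fastforce
  qed
  have "1 \<le> e" unfolding e_def
  proof (rule cInf_greatest[OF \<open>S \<noteq> {}\<close>])
    fix t assume "t \<in> S"
    then show "1 \<le> t" using assms(2) unfolding first_entry_def S_def by force
  qed
  define k where "k = nat \<lfloor>(e - 1) / real L\<rfloor>"
  have L: "real L > 0" using L_pos by simp
  have k_floor: "real k = of_int \<lfloor>(e - 1) / real L\<rfloor>"
    unfolding k_def using \<open>1 \<le> e\<close> L by simp
  have "real k \<le> (e - 1) / real L" "(e - 1) / real L < real k + 1"
    unfolding k_floor by linarith+
  then have k: "real k * real L \<le> e - 1" "e - 1 < (real k + 1) * real L"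
    using L by (simp_all add: field_simps)
  define t where "t = e - 1 - real k * real L"
  have "T s x \<in> entry_tower" if "t < s" "s \<le> t + 1" for s
  proof -
    have "0 \<le> s" "real (k * L) + s \<le> e" "e < real (k * L) + 1 + s"
      using that k unfolding t_def of_nat_mult by linarith+
    then have "T s x \<in> tower_floor k"
      unfolding tower_floor_def
      using flow_mem_first_entry[where e = e and x = x and s = s and a = "real (k * L)"] absent soon
      by blast
    then show ?thesis unfolding entry_tower_def by blast
  qed
  moreover have "0 \<le> t" "t < real L" using k unfolding t_def by (auto simp: algebra_simps)
  ultimately show ?thesis by blast
qed

end

context standard_flow
begin

lemma ex_visit_window_sets:
  assumes "aperiodic_flow M T" "ergodic_flow M T" and "1 \<le> L"
  shows "\<exists>D B. D \<in> sets M \<and> B \<in> sets M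
    \<and> real L * measure M D \<le> 5 \<and> real L * measure M B \<le> 4
    \<and> (\<forall>x. x \<notin> B \<longrightarrow> (\<exists>t. 0 \<le> t \<and> t < real L \<and> (\<forall>s. t < s \<and> s \<le> t + 1 \<longrightarrow> T s x \<in> D)))"
proof -
  obtain D0 where D0: "D0 \<in> sets M" "emeasure M D0 > 0" "\<forall>y\<in>D0. \<forall>s\<in>{1..real L + 3}. T s y \<notin> D0"
    using ex_return_free_set[OF assms(1), of "real L + 3"] by auto
  interpret return_free_set M T D0 L
    by unfold_locales (use D0 \<open>1 \<le> L\<close> in auto)
  have "measure M (first_entry 0 1 \<union> never_present) \<le> measure M (first_entry 0 1) + measure M never_present"
    by (rule measure_Un_le) auto
  then have "real L * measure M (first_entry 0 1 \<union> never_present) \<le> real L * measure M (first_entry 0 1)"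
    using never_present_null[OF assms(2)] by (intro mult_left_mono) auto
  then have "real L * measure M (first_entry 0 1 \<union> never_present) \<le> 4"
    using measure_first_entry_0_1 by linarith
  then show ?thesis
    by (intro exI[of _ entry_tower] exI[of _ "first_entry 0 1 \<union> never_present"] conjI allI impI
        entry_tower_sets measure_entry_tower window_in_entry_tower) auto
qed

section \<open>Coboundaries with large Birkhoff averages\<close>

lemma birkhoff_avg_coboundary:
  fixes g :: "'a \<Rightarrow> ennreal"
  assumes [measurable]: "g \<in> borel_measurable M"
    and finite: "\<And>n::nat. (\<integral>\<^sup>+s. indicator {0..real n} s * g (T s x) \<partial>lborel) \<noteq> \<infinity>"
    and "1 \<le> t"
  shows "t * birkhoff_avg T (\<lambda>y. enn2real (g y) - enn2real (g (T 1 y))) t x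
    = enn2real (\<integral>\<^sup>+s. indicator {0<..1} s * g (T s x) \<partial>lborel)
      - enn2real (\<integral>\<^sup>+s. indicator {t..<t+1} s * g (T s x) \<partial>lborel)"
proof -
  have [measurable]: "(\<lambda>s. g (T s x)) \<in> borel_measurable borel"
    using measurable_compose[OF measurable_orbit assms(1)] by simp
  define n :: nat where "n = nat \<lceil>t\<rceil> + 2"
  have "t + 1 \<le> real n" unfolding n_def by linarith
  note restrict = lborel_integral_enn2real[where g = "\<lambda>s. g (T s x)" and B = "{0..real n}", OF _ _ _ _ finite]
  have "t * birkhoff_avg T (\<lambda>y. enn2real (g y) - enn2real (g (T 1 y))) t x
      = (LBINT s=0..t. enn2real (g (T s x)) - enn2real (g (T (1 + s) x)))"
    unfolding birkhoff_avg_def using \<open>1 \<le> t\<close> by (simp add: flow_add)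
  also have "\<dots> = (\<integral>s. indicator {0<..1} s * enn2real (g (T s x)) \<partial>lborel)
      - (\<integral>s. indicator {t..<t+1} s * enn2real (g (T s x)) \<partial>lborel)"
    using \<open>1 \<le> t\<close> \<open>t + 1 \<le> real n\<close>
    by (intro interval_integral_telescope[where \<phi> = "\<lambda>s. enn2real (g (T s x))"] restrict(1)) auto
  also have "\<dots> = enn2real (\<integral>\<^sup>+s. indicator {0<..1} s * g (T s x) \<partial>lborel)
      - enn2real (\<integral>\<^sup>+s. indicator {t..<t+1} s * g (T s x) \<partial>lborel)"
    using \<open>1 \<le> t\<close> \<open>t + 1 \<le> real n\<close> by (subst (1 2) restrict(2)) auto
  finally show ?thesis .
qed

lemma AE_orbit_nn_integral_finite:
  fixes g :: "'a \<Rightarrow> ennreal"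
  assumes [measurable]: "g \<in> borel_measurable M" and "(\<integral>\<^sup>+x. g x \<partial>M) \<noteq> \<infinity>"
  shows "AE x in M. \<forall>n::nat. (\<integral>\<^sup>+s. indicator {0..real n} s * g (T s x) \<partial>lborel) \<noteq> \<infinity>"
proof (subst AE_all_countable, intro allI)
  fix n :: nat
  have [measurable]: "(\<lambda>p. g (T (snd p) (fst p))) \<in> borel_measurable (M \<Otimes>\<^sub>M lborel)"
    by (rule measurable_compose[OF measurable_flow_swap assms(1)])
  have "(\<integral>\<^sup>+x. \<integral>\<^sup>+s. indicator {0..real n} s * g (T s x) \<partial>lborel \<partial>M)
      = ennreal (real n) * (\<integral>\<^sup>+x. g x \<partial>M)"
    using nn_integral_orbit_segment[OF assms(1), of 0 "real n"] by simp
  also have "\<dots> \<noteq> \<infinity>" using assms(2) by (simp add: ennreal_mult_eq_top_iff)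
  finally show "AE x in M. (\<integral>\<^sup>+s. indicator {0..real n} s * g (T s x) \<partial>lborel) \<noteq> \<infinity>"
    by (intro nn_integral_PInf_AE) measurable
qed

lemma AE_eventually_flow_notin:
  assumes [measurable]: "\<And>j. B j \<in> sets M" and "summable (\<lambda>j. measure M (B j))"
  shows "AE x in M. eventually (\<lambda>j. T (c j) x \<notin> B j) sequentially"
proof -
  have [measurable]: "T (c j) -` B j \<in> sets M" for j
    using measurable_sets[OF measurable_flow, of "B j"] by (simp add: space_eq_UNIV)
  have "AE x in M. eventually (\<lambda>j. x \<in> space M - T (c j) -` B j) sequentially"
  proof (rule borel_cantelli_AE1)
    show "summable (\<lambda>j. measure M (T (c j) -` B j))"
      using assms(2) by (simp add: measure_flow_vimage)
  qed (auto simp: less_top[symmetric])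
  then show ?thesis by (simp add: space_eq_UNIV)
qed

end

locale visit_schedule = standard_flow +
  fixes \<phi> :: "real \<Rightarrow> real" and start :: "nat \<Rightarrow> real" and len :: "nat \<Rightarrow> nat"
    and D B :: "nat \<Rightarrow> 'a set" and weight :: "nat \<Rightarrow> real"
  assumes D_sets[measurable]: "D j \<in> sets M" and B_sets[measurable]: "B j \<in> sets M"
    and summable_weight: "summable (\<lambda>j. weight j * measure M (D j))"
    and summable_B: "summable (\<lambda>j. measure M (B j))"
    and weight_ge: "real j \<le> weight j"
    and start_ge: "real j + 1 \<le> start j"
    and window: "x \<notin> B j \<Longrightarrow>
      \<exists>t. 0 \<le> t \<and> t < real (len j) \<and> (\<forall>s. t < s \<and> s \<le> t + 1 \<longrightarrow> T s x \<in> D j)"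
    and \<phi>_pos: "0 < t \<Longrightarrow> 0 < \<phi> t"
    and \<phi>_small: "start j \<le> \<tau> \<Longrightarrow> \<tau> \<le> start j + real (len j) \<Longrightarrow> real j * (\<tau> * \<phi> \<tau>) \<le> weight j"
begin

definition bump :: "'a \<Rightarrow> ennreal" where
  "bump x = (\<Sum>j. ennreal (weight j) * indicator (D j) x)"

definition coboundary :: "'a \<Rightarrow> real" where
  "coboundary x = enn2real (bump x) - enn2real (bump (T 1 x))"

lemma measurable_bump[measurable]: "bump \<in> borel_measurable M"
  unfolding bump_def by measurable

lemma weight_nonneg: "0 \<le> weight j"
  using weight_ge[of j] by linarith

lemma nn_integral_bump_finite: "(\<integral>\<^sup>+x. bump x \<partial>M) \<noteq> \<infinity>"
proof -
  have "(\<integral>\<^sup>+x. bump x \<partial>M) = (\<Sum>j. \<integral>\<^sup>+x. ennreal (weight j) * indicator (D j) x \<partial>M)"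
    unfolding bump_def by (rule nn_integral_suminf) measurable
  also have "\<dots> = (\<Sum>j. ennreal (weight j * measure M (D j)))"
    by (simp add: nn_integral_cmult_indicator emeasure_eq_measure ennreal_mult weight_nonneg)
  also have "\<dots> = ennreal (\<Sum>j. weight j * measure M (D j))"
    by (intro suminf_ennreal2 summable_weight) (simp add: weight_nonneg)
  finally show ?thesis by simp
qed

lemma integrable_bump: "integrable M (\<lambda>x. enn2real (bump x))"
proof (rule integrableI_nonneg)
  have "(\<integral>\<^sup>+x. ennreal (enn2real (bump x)) \<partial>M) \<le> (\<integral>\<^sup>+x. bump x \<partial>M)"
    by (intro nn_integral_mono) (simp add: ennreal_enn2real_if)
  then show "(\<integral>\<^sup>+x. ennreal (enn2real (bump x)) \<partial>M) < \<infinity>"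
    using nn_integral_bump_finite by (simp add: less_top[symmetric]) (metis neq_top_trans)
qed auto

lemma integrable_coboundary: "integrable M coboundary"
  unfolding coboundary_def[abs_def] by (intro Bochner_Integration.integrable_diff integrable_bump integrable_flow)

lemma integral_coboundary: "integral\<^sup>L M coboundary = 0"
  unfolding coboundary_def[abs_def]
  using Bochner_Integration.integral_diff[OF integrable_bump integrable_flow[OF integrable_bump, of 1]]
    integral_flow[of "\<lambda>x. enn2real (bump x)" 1]
  by simp

lemma bump_window:
  assumes "T (start j) x \<notin> B j"
  shows "\<exists>\<tau>. start j \<le> \<tau> \<and> \<tau> \<le> start j + real (len j)
    \<and> ennreal (weight j) \<le> (\<integral>\<^sup>+s. indicator {\<tau>..<\<tau>+1} s * bump (T s x) \<partial>lborel)"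
proof -
  obtain t where t: "0 \<le> t" "t < real (len j)"
    and visits: "\<And>s. t < s \<Longrightarrow> s \<le> t + 1 \<Longrightarrow> T s (T (start j) x) \<in> D j"
    using window[OF assms] by blast
  have "ennreal (weight j) \<le> bump (T s x)" if "start j + t < s" "s < start j + t + 1" for s
  proof -
    have "T (s - start j) (T (start j) x) \<in> D j" using that by (intro visits) auto
    then have "ennreal (weight j) = (\<Sum>i\<in>{j}. ennreal (weight i) * indicator (D i) (T s x))"
      by (simp add: flow_add[symmetric])
    also have "\<dots> \<le> bump (T s x)" unfolding bump_def by (intro sum_le_suminf summableI) auto
    finally show ?thesis .
  qed
  then show ?thesis using t
    by (intro exI[of _ "start j + t"] conjI nn_integral_unit_window_ge) auto
qed

text \<open>Over a unit time window spent in \<open>D j\<close>, the Birkhoff sum of the coboundary drops by at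
  least \<open>weight j\<close>, which exceeds \<open>j \<tau> \<phi>(\<tau>)\<close>.\<close>

lemma birkhoff_ratio_ge:
  assumes finite: "\<forall>n::nat. (\<integral>\<^sup>+s. indicator {0..real n} s * bump (T s x) \<partial>lborel) \<noteq> \<infinity>"
    and "T (start j) x \<notin> B j" and "2 * C \<le> real j"
    and "2 * enn2real (\<integral>\<^sup>+s. indicator {0<..1} s * bump (T s x) \<partial>lborel) \<le> real j"
  shows "\<exists>\<tau>\<ge>start j. C \<le> \<bar>birkhoff_avg T coboundary \<tau> x\<bar> / \<phi> \<tau>"
proof -
  define c where "c = enn2real (\<integral>\<^sup>+s. indicator {0<..1} s * bump (T s x) \<partial>lborel)"
  obtain \<tau> where \<tau>: "start j \<le> \<tau>" "\<tau> \<le> start j + real (len j)"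
    and W_ge: "ennreal (weight j) \<le> (\<integral>\<^sup>+s. indicator {\<tau>..<\<tau>+1} s * bump (T s x) \<partial>lborel)"
    using bump_window[OF assms(2)] by blast
  define W where "W = (\<integral>\<^sup>+s. indicator {\<tau>..<\<tau>+1} s * bump (T s x) \<partial>lborel)"
  have "1 \<le> \<tau>" using start_ge[of j] \<tau>(1) by simp
  obtain n :: nat where "\<tau> + 1 \<le> real n" using real_arch_simple by blast
  then have "W \<le> (\<integral>\<^sup>+s. indicator {0..real n} s * bump (T s x) \<partial>lborel)"
    unfolding W_def using \<open>1 \<le> \<tau>\<close> by (intro nn_integral_mono) (auto simp: indicator_def)
  then have "W \<noteq> \<infinity>" using finite by (auto simp: top_unique)
  then have "W = ennreal (enn2real W)" by (simp add: ennreal_enn2real_if)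
  then have "ennreal (weight j) \<le> ennreal (enn2real W)" using W_ge unfolding W_def by simp
  then have "weight j \<le> enn2real W" by (subst (asm) ennreal_le_iff) auto
  have identity: "\<tau> * birkhoff_avg T coboundary \<tau> x = c - enn2real W"
    unfolding c_def W_def coboundary_def[abs_def]
    by (rule birkhoff_avg_coboundary[OF measurable_bump _ \<open>1 \<le> \<tau>\<close>]) (use finite in auto)
  have "0 < \<phi> \<tau>" using \<phi>_pos \<open>1 \<le> \<tau>\<close> by simp
  have "2 * C * (\<tau> * \<phi> \<tau>) \<le> real j * (\<tau> * \<phi> \<tau>)"
    using assms(3) \<open>1 \<le> \<tau>\<close> \<open>0 < \<phi> \<tau>\<close> by (intro mult_right_mono) auto
  then have "C * (\<tau> * \<phi> \<tau>) \<le> weight j / 2" using \<phi>_small[OF \<tau>] by linarith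
  also have "\<dots> \<le> - (\<tau> * birkhoff_avg T coboundary \<tau> x)"
    using identity \<open>weight j \<le> enn2real W\<close> assms(4) weight_ge[of j] unfolding c_def by linarith
  also have "\<dots> \<le> \<tau> * \<bar>birkhoff_avg T coboundary \<tau> x\<bar>"
    using \<open>1 \<le> \<tau>\<close> abs_ge_minus_self[of "\<tau> * birkhoff_avg T coboundary \<tau> x"]
    by (simp add: abs_mult)
  finally have "C * (\<tau> * \<phi> \<tau>) \<le> \<tau> * \<bar>birkhoff_avg T coboundary \<tau> x\<bar>" .
  then have "C \<le> \<bar>birkhoff_avg T coboundary \<tau> x\<bar> / \<phi> \<tau>"
    using \<open>1 \<le> \<tau>\<close> \<open>0 < \<phi> \<tau>\<close> by (simp add: field_simps)
  then show ?thesis using \<tau>(1) by blast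
qed

theorem limsup_birkhoff_coboundary:
  "AE x in M. Limsup at_top (\<lambda>t. ereal (\<bar>birkhoff_avg T coboundary t x\<bar> / \<phi> t)) = \<infinity>"
  using AE_orbit_nn_integral_finite[OF measurable_bump nn_integral_bump_finite]
    AE_eventually_flow_notin[OF B_sets summable_B, of start]
proof eventually_elim
  case (elim x)
  then obtain j0 where j0: "\<And>j. j \<ge> j0 \<Longrightarrow> T (start j) x \<notin> B j"
    by (auto simp: eventually_sequentially)
  define c where "c = enn2real (\<integral>\<^sup>+s. indicator {0<..1} s * bump (T s x) \<partial>lborel)"
  show ?case
  proof (rule Limsup_at_top_eq_PInfI)
    fix C N :: real
    obtain j :: nat where "max (max (2 * C) (2 * c)) (max N (real j0)) \<le> real j"
      using real_arch_simple by blast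
    then have j: "2 * C \<le> real j" "2 * c \<le> real j" "N \<le> real j" "j0 \<le> j" by auto
    obtain \<tau> where "\<tau> \<ge> start j" "C \<le> \<bar>birkhoff_avg T coboundary \<tau> x\<bar> / \<phi> \<tau>"
      using birkhoff_ratio_ge[OF elim(1) j0[OF j(4)] j(1) j(2)[unfolded c_def]] by blast
    moreover have "N \<le> start j" using j start_ge[of j] by linarith
    ultimately show "\<exists>\<tau>\<ge>N. ereal C \<le> ereal (\<bar>birkhoff_avg T coboundary \<tau> x\<bar> / \<phi> \<tau>)"
      by (intro exI[of _ \<tau>]) auto
  qed
qed

end

context standard_flow
begin

lemma ex_visit_schedule:
  assumes "aperiodic_flow M T" "ergodic_flow M T"
    and "\<forall>t>0. \<phi> t > 0" and "(\<phi> \<longlongrightarrow> 0) at_top"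
  shows "\<exists>start len D B weight. visit_schedule M T \<phi> start len D B weight"
proof -
  obtain start where start: "\<And>j. real j + 1 \<le> start j" "\<And>j \<tau>. start j \<le> \<tau> \<Longrightarrow> \<phi> \<tau> \<le> 1 / 4^j"
    using ex_thresholds_geometric[OF assms(4)] by blast
  define len where "len j = nat \<lceil>start j\<rceil> + 4^j" for j :: nat
  have len_pos: "1 \<le> len j" for j unfolding len_def by (simp add: Suc_leI)
  have len_start: "start j \<le> real (len j)" for j
    using real_nat_ceiling_ge[of "start j"] zero_le_power[of "4::real" j]
    unfolding len_def of_nat_add of_nat_power of_nat_numeral by linarith
  have len_pow: "(4::real)^j \<le> real (len j)" for j unfolding len_def by simp
  note len = len_pos len_start len_pow
  have "\<forall>j. \<exists>D B. D \<in> sets M \<and> B \<in> sets M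
      \<and> real (len j) * measure M D \<le> 5 \<and> real (len j) * measure M B \<le> 4
      \<and> (\<forall>x. x \<notin> B \<longrightarrow> (\<exists>t. 0 \<le> t \<and> t < real (len j)
            \<and> (\<forall>s. t < s \<and> s \<le> t + 1 \<longrightarrow> T s x \<in> D)))"
    using ex_visit_window_sets[OF assms(1,2) len(1)] by blast
  then obtain D B where D: "\<And>j. D j \<in> sets M" "\<And>j. real (len j) * measure M (D j) \<le> 5"
    and B: "\<And>j. B j \<in> sets M" "\<And>j. real (len j) * measure M (B j) \<le> 4"
    and window: "\<And>j x. x \<notin> B j \<Longrightarrow>
      \<exists>t. 0 \<le> t \<and> t < real (len j) \<and> (\<forall>s. t < s \<and> s \<le> t + 1 \<longrightarrow> T s x \<in> D j)"
    by metis
  define weight where "weight j = real j * ((start j + real (len j)) / 4^j + 1)" for j :: nat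
  have "visit_schedule M T \<phi> start len D B weight"
  proof unfold_locales
    show "summable (\<lambda>j. weight j * measure M (D j))"
    proof (rule summable_comparison_test[of _ "\<lambda>j. 15 * (1/2::real)^j"])
      have "weight j * measure M (D j) \<le> 15 / 2^j" for j
        unfolding weight_def using start(1)[of j] len(2,3)[of j] D(2)[of j]
        by (intro weighted_measure_le) auto
      moreover have "0 \<le> weight j" for j
        unfolding weight_def using start(1)[of j] by (auto intro!: mult_nonneg_nonneg add_nonneg_nonneg)
      ultimately show "\<exists>N. \<forall>j\<ge>N. norm (weight j * measure M (D j)) \<le> 15 * (1/2)^j"
        by (auto simp: power_one_over abs_of_nonneg)
    qed (auto intro!: summable_mult summable_geometric)
    show "summable (\<lambda>j. measure M (B j))"
    proof (rule summable_comparison_test[of _ "\<lambda>j. 4 * (1/4::real)^j"])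
      have "measure M (B j) \<le> 4 / 4^j" for j
      proof -
        have "4^j * measure M (B j) \<le> real (len j) * measure M (B j)"
          using len(3)[of j] by (intro mult_right_mono) auto
        then show ?thesis using B(2)[of j] by (simp add: field_simps)
      qed
      then show "\<exists>N. \<forall>j\<ge>N. norm (measure M (B j)) \<le> 4 * (1/4)^j"
        by (auto simp: power_one_over)
    qed (auto intro!: summable_mult summable_geometric)
    show "real j \<le> weight j" for j
      unfolding weight_def using start(1)[of j] by (simp add: mult_le_cancel_left1)
    show "real j * (\<tau> * \<phi> \<tau>) \<le> weight j"
      if "start j \<le> \<tau>" "\<tau> \<le> start j + real (len j)" for j \<tau>
    proof -
      have "0 < \<phi> \<tau>" using assms(3) that start(1)[of j] by auto
      then have "\<tau> * \<phi> \<tau> \<le> (start j + real (len j)) * (1 / 4^j)"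
        using that start(1)[of j] start(2)[OF that(1)] by (intro mult_mono) auto
      then show ?thesis
        unfolding weight_def by (intro mult_left_mono) auto
    qed
  qed (use D B window start assms(3) in auto)
  then show ?thesis by blast
qed

end

theorem theorem3:
  fixes M :: "'a::polish_space measure"
    and T :: "real \<Rightarrow> 'a \<Rightarrow> 'a"
    and \<phi> :: "real \<Rightarrow> real"
  assumes "standard_prob_space M"
    and "mp_flow M T"
    and "aperiodic_flow M T"
    and "ergodic_flow M T"
    and "\<forall>t>0. \<phi> t > 0"
    and "(\<phi> \<longlongrightarrow> 0) at_top"
  shows "\<exists>f. integrable M f \<and> integral\<^sup>L M f = 0 \<and>
           (AE x in M. Limsup at_top (\<lambda>t. ereal (\<bar>birkhoff_avg T f t x\<bar> / \<phi> t)) = \<infinity>)"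
proof -
  interpret standard_flow M T
    by (rule standard_flow.intro[OF assms(1,2)])
  obtain start len D B weight where "visit_schedule M T \<phi> start len D B weight"
    using ex_visit_schedule[OF assms(3-6)] by blast
  then interpret visit_schedule M T \<phi> start len D B weight .
  show ?thesis
    using integrable_coboundary integral_coboundary limsup_birkhoff_coboundary by blast
qed

end
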